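(* Let $P$ be the Borel probability measure on $\mathbb{R}$ with density $f(x)=(3/2)^m$ if $x\in J_m:=[1-\frac{1}{3^{m-1}},1-\frac{2}{3^m}]$ for some $m\in\mathbb{N}$, and $f(x)=0$ otherwise. Let $k,n\in\mathbb{N}$ and let $\alpha_n$ be an optimal set of $n$-means for $P$ such that $\mathrm{card}(\alpha_n\cap[J_{k+1}(0),1])\ge2$. Then: (i) $\alpha_n\cap J_{k+1}\neq\emptyset$ and $\alpha_n\cap[J_{k+2}(0),1]\neq\emptyset$; (ii) $\alpha_n$ contains no point of the open interval $(J_{k+1}(1),J_{k+2}(0))$; (iii) the Voronoi region of any point of $\alpha_n\cap J_{k+1}$ contains no point of $[J_{k+2}(0),1]$, and the Voronoi region of any point of $\alpha_n\cap[J_{k+2}(0),1]$ contains no point of $J_{k+1}$.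
   Context: $\mathbb{N}=\{1,2,\dots\}$. For $m\in\mathbb{N}$, $J_m(0)=1-\frac{1}{3^{m-1}}$ and $J_m(1)=1-\frac{2}{3^m}$ are the left and right endpoints of $J_m$. An optimal set of $n$-means for $P$ is a set $\alpha\subset\mathbb{R}$ with $\mathrm{card}(\alpha)\le n$ attaining $\inf\{\int\min_{a\in\alpha}(x-a)^2\,dP(x):\mathrm{card}(\alpha)\le n\}$. For a finite $\alpha$ and $a\in\alpha$, the Voronoi region of $a$ is $M(a|\alpha)=\{x\in\mathbb{R}:|x-a|=\min_{b\in\alpha}|x-b|\}$. *)

theory Defs
  imports "HOL-Analysis.Analysis"
begin

definition J0 :: "nat \<Rightarrow> real" where "J0 m = 1 - 1 / 3 ^ (m - 1)"
definition J1 :: "nat \<Rightarrow> real" where "J1 m = 1 - 2 / 3 ^ m"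
definition J :: "nat \<Rightarrow> real set" where "J m = {J0 m .. J1 m}"

text \<open>Density: (3/2)^m on J m (m \<ge> 1), 0 elsewhere; the J m are pairwise disjoint.\<close>
definition dens :: "real \<Rightarrow> real" where
  "dens x = (if \<exists>m\<ge>1. x \<in> J m then (3/2) ^ (THE m. m \<ge> 1 \<and> x \<in> J m) else 0)"

definition P :: "real measure" where
  "P = density lborel (\<lambda>x. ennreal (dens x))"

definition distortion :: "real set \<Rightarrow> ennreal" where
  "distortion \<alpha> = (\<integral>\<^sup>+ x. ennreal (Min ((\<lambda>a. (x - a)\<^sup>2) ` \<alpha>)) \<partial>P)"

definition optimal_n_means :: "nat \<Rightarrow> real set \<Rightarrow> bool" where
  "optimal_n_means n \<alpha> \<longleftrightarrow> finite \<alpha> \<and> \<alpha> \<noteq> {} \<and> card \<alpha> \<le> n \<and>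
     (\<forall>\<beta>. finite \<beta> \<and> \<beta> \<noteq> {} \<and> card \<beta> \<le> n \<longrightarrow> distortion \<alpha> \<le> distortion \<beta>)"

definition voronoi :: "real \<Rightarrow> real set \<Rightarrow> real set" where
  "voronoi a \<alpha> = {x. \<bar>x - a\<bar> = Min ((\<lambda>b. \<bar>x - b\<bar>) ` \<alpha>)}"

end

theory Submission
  imports Defs
begin

text \<open>Optimality of \<alpha> is used through two local conditions: every point of \<alpha> is the
  P-centroid of its Voronoi cell, which has positive mass, and replacing a few points of \<alpha> by
  other points cannot lower the error on the union of their cells.

  The proof is an induction on the level j. Call \<alpha> separated at j if the support of P above
  J0 j is served exactly by the points of \<alpha> in [J0 j, 1]. If \<alpha> is separated at j and has two
  points in [J0 j, 1], then it has a point in J j, a point in [J0 (j+1), 1] and none in the gap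
  between them: for a missing point the centroid of a cell lands on the wrong side of the gap, and
  a point in the gap can be moved (together with its left neighbour, if that lies in J j) so that
  the error strictly decreases. The midpoint of the last point below the gap and the first one
  above it then lies in the gap, which yields separation at j+1 and the statements about the
  Voronoi regions.\<close>

section \<open>The intervals J m\<close>

lemma J0_eq_pow: "m \<ge> 1 \<Longrightarrow> J0 m = 1 - 3 / 3 ^ m"
  by (cases m) (auto simp: J0_def)

lemma J0_Suc: "J0 (Suc m) = 1 - 1 / 3 ^ m"
  by (simp add: J0_def)

lemma J0_nonneg: "0 \<le> J0 m"
  by (cases m) (auto simp: J0_def)

lemma J1_less_1: "J1 m < 1"
  by (simp add: J1_def)

lemma J_subset: "J m \<subseteq> {0..<1}"
  using J0_nonneg[of m] J1_less_1[of m] by (auto simp: J_def)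

lemma J0_less_J1: "m \<ge> 1 \<Longrightarrow> J0 m < J1 m"
  by (simp add: J0_eq_pow J1_def divide_strict_right_mono)

lemma J1_less_J0_Suc: "J1 m < J0 (Suc m)"
  by (simp add: J0_def J1_def divide_strict_right_mono)

lemma J0_mono: "m \<le> m' \<Longrightarrow> J0 m \<le> J0 m'"
proof -
  assume "m \<le> m'"
  hence "(3::real) ^ (m - 1) \<le> 3 ^ (m' - 1)" by (intro power_increasing) auto
  thus ?thesis unfolding J0_def by (intro diff_left_mono divide_left_mono) auto
qed

lemma J1_mono: "m \<le> m' \<Longrightarrow> J1 m \<le> J1 m'"
proof -
  assume "m \<le> m'"
  hence "(3::real) ^ m \<le> 3 ^ m'" by (intro power_increasing) auto
  thus ?thesis unfolding J1_def by (intro diff_left_mono divide_left_mono) auto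
qed

lemma J1_less_J0: "m < m' \<Longrightarrow> J1 m < J0 m'"
  using J1_less_J0_Suc[of m] J0_mono[of "Suc m" m'] by simp

lemma J_disjoint: "x \<in> J m \<Longrightarrow> x \<in> J m' \<Longrightarrow> m = m'"
  using J1_less_J0[of m m'] J1_less_J0[of m' m] by (cases m m' rule: linorder_cases) (auto simp: J_def)

definition Jlen :: "nat \<Rightarrow> real" where "Jlen j = 1 / 3 ^ j"

lemma Jlen_pos: "0 < Jlen j"
  by (simp add: Jlen_def)

lemma J_geometry:
  assumes "1 \<le> j"
  shows "J1 j = J0 j + Jlen j" "J0 (Suc j) = J0 j + 2 * Jlen j" "1 = J0 j + 3 * Jlen j"
    "(3/2) ^ j * Jlen j = (1/2) ^ j"
  using assms by (simp_all add: J0_eq_pow J0_Suc J1_def Jlen_def power_divide field_simps)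

lemma emeasure_lborel_J: "1 \<le> m \<Longrightarrow> emeasure lborel (J m) = ennreal (1 / 3 ^ m)"
  using J0_less_J1[of m] J_geometry(1)[of m] by (simp add: J_def Jlen_def)

section \<open>The measure P\<close>

definition Jsupp :: "real set" where "Jsupp = (\<Union>m\<in>{1..}. J m)"

lemma Jsupp_sets[measurable]: "Jsupp \<in> sets borel"
  unfolding Jsupp_def J_def by auto

lemma Jsupp_unit: "y \<in> Jsupp \<Longrightarrow> 0 \<le> y \<and> y < 1"
  unfolding Jsupp_def using J_subset by fastforce

lemma Jsupp_gap: "y \<in> Jsupp \<Longrightarrow> \<not> (J1 j < y \<and> y < J0 (Suc j))"
proof
  assume y: "y \<in> Jsupp" and g: "J1 j < y \<and> y < J0 (Suc j)"
  then obtain m where m: "y \<in> J m" by (auto simp: Jsupp_def)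
  show False
  proof (cases "m \<le> j")
    case True
    hence "J1 m \<le> J1 j" by (rule J1_mono)
    thus False using m g by (auto simp: J_def)
  next
    case False
    hence "J0 (Suc j) \<le> J0 m" by (intro J0_mono) simp
    thus False using m g by (auto simp: J_def)
  qed
qed

lemma dens_J: "1 \<le> m \<Longrightarrow> x \<in> J m \<Longrightarrow> dens x = (3/2) ^ m"
proof -
  assume h: "1 \<le> m" "x \<in> J m"
  have "(THE m. m \<ge> 1 \<and> x \<in> J m) = m"
    using h J_disjoint by (intro the_equality) auto
  thus ?thesis using h unfolding dens_def by auto
qed

lemma dens_outside: "x \<notin> Jsupp \<Longrightarrow> dens x = 0"
  by (auto simp: dens_def Jsupp_def)

lemma dens_nonneg: "0 \<le> dens x"
  by (auto simp: dens_def)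

lemma dens_eq_suminf: "dens x = (\<Sum>i. indicator (J (Suc i)) x * (3/2) ^ Suc i)"
proof (cases "x \<in> Jsupp")
  case True
  then obtain m where m: "1 \<le> m" "x \<in> J m" by (auto simp: Jsupp_def)
  then obtain i where i: "x \<in> J (Suc i)" by (cases m) auto
  have "(\<Sum>j. indicator (J (Suc j)) x * ((3::real)/2) ^ Suc j)
      = (\<Sum>j\<in>{i}. indicator (J (Suc j)) x * ((3::real)/2) ^ Suc j)"
  proof (rule suminf_finite)
    fix j assume "j \<notin> {i}"
    hence "x \<notin> J (Suc j)" using J_disjoint[of x "Suc i" "Suc j"] i by auto
    thus "indicator (J (Suc j)) x * ((3::real)/2) ^ Suc j = 0" by simp
  qed auto
  thus ?thesis using dens_J[OF _ i] i by simp
next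
  case False
  hence "\<And>j. x \<notin> J (Suc j)" by (auto simp: Jsupp_def)
  thus ?thesis using dens_outside[OF False] by simp
qed

lemma borel_measurable_dens[measurable]: "dens \<in> borel_measurable borel"
  by (subst dens_eq_suminf[abs_def]) (auto simp: J_def)

lemma sets_P[simp, measurable_cong]: "sets P = sets borel"
  by (simp add: P_def)

lemma space_P[simp]: "space P = UNIV"
  by (simp add: P_def)

lemma emeasure_P: "A \<in> sets borel \<Longrightarrow> emeasure P A = (\<integral>\<^sup>+x. ennreal (dens x) * indicator A x \<partial>lborel)"
  unfolding P_def by (subst emeasure_density) auto

lemma AE_in_Jsupp: "AE x in P. x \<in> Jsupp"
proof (rule AE_I[of _ _ "- Jsupp"])
  have "emeasure P (- Jsupp) = (\<integral>\<^sup>+x. ennreal (dens x) * indicator (- Jsupp) x \<partial>lborel)"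
    by (rule emeasure_P) auto
  also have "(\<lambda>x. ennreal (dens x) * indicator (- Jsupp) x) = (\<lambda>x. 0)"
    by (auto simp: fun_eq_iff dens_outside split: split_indicator)
  finally show "emeasure P (- Jsupp) = 0" by simp
qed auto

lemma emeasure_P_singleton: "emeasure P {x} = 0"
proof -
  have "emeasure P {x} = (\<integral>\<^sup>+y. ennreal (dens y) * indicator {x} y \<partial>lborel)"
    by (rule emeasure_P) auto
  also have "\<dots> = (\<integral>\<^sup>+y. ennreal (dens x) * indicator {x} y \<partial>lborel)"
    by (intro nn_integral_cong) (auto split: split_indicator)
  also have "\<dots> = 0" by (simp add: nn_integral_cmult)
  finally show ?thesis .
qed

lemma AE_P_neq: "AE y in P. y \<noteq> x"
  using emeasure_P_singleton[of x] by (intro AE_I[of _ _ "{x}"]) auto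

lemma dens_tail_suminf:
  assumes "1 \<le> m"
  shows "ennreal (dens y) * indicator {J0 m..1} y
    = (\<Sum>i. ennreal ((3/2) ^ (i + m)) * indicator (J (i + m)) y)"
proof (cases "y \<in> Jsupp \<and> J0 m \<le> y")
  case True
  then obtain p where p: "1 \<le> p" "y \<in> J p" "J0 m \<le> y" by (auto simp: Jsupp_def)
  have "m \<le> p"
  proof (rule ccontr)
    assume "\<not> m \<le> p"
    hence "J1 p < J0 m" by (intro J1_less_J0) simp
    thus False using p by (auto simp: J_def)
  qed
  then obtain i where i: "p = i + m" by (metis le_add_diff_inverse2)
  have "(\<Sum>j. ennreal ((3/2) ^ (j + m)) * indicator (J (j + m)) y)
      = (\<Sum>j\<in>{i}. ennreal ((3/2) ^ (j + m)) * indicator (J (j + m)) y)"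
  proof (rule suminf_finite)
    fix j assume "j \<notin> {i}"
    hence "y \<notin> J (j + m)" using J_disjoint[of y p "j + m"] p i by auto
    thus "ennreal ((3/2) ^ (j + m)) * indicator (J (j + m)) y = 0" by simp
  qed auto
  moreover have "(\<Sum>j\<in>{i}. g j) = g i" for g :: "nat \<Rightarrow> ennreal" by simp
  moreover have "y \<le> 1" using p J_subset[of p] by auto
  ultimately show ?thesis using dens_J[OF p(1,2)] p i by (simp del: sum.insert sum.empty)
next
  case False
  have "y \<notin> J (j + m)" for j
  proof
    assume y: "y \<in> J (j + m)"
    hence "J0 m \<le> y" using J0_mono[of m "j + m"] by (auto simp: J_def)
    thus False using False y assms by (auto simp: Jsupp_def)
  qed
  thus ?thesis using False dens_outside by (auto split: split_indicator)
qed

lemma emeasure_P_tail: "1 \<le> m \<Longrightarrow> emeasure P {J0 m..1} = ennreal ((1/2) ^ m * 2)"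
proof -
  assume m: "1 \<le> m"
  have "emeasure P {J0 m..1} = (\<integral>\<^sup>+y. ennreal (dens y) * indicator {J0 m..1} y \<partial>lborel)"
    by (rule emeasure_P) auto
  also have "\<dots> = (\<integral>\<^sup>+y. (\<Sum>i. ennreal ((3/2) ^ (i + m)) * indicator (J (i + m)) y) \<partial>lborel)"
    using dens_tail_suminf[OF m] by simp
  also have "\<dots> = (\<Sum>i. \<integral>\<^sup>+y. ennreal ((3/2) ^ (i + m)) * indicator (J (i + m)) y \<partial>lborel)"
    by (rule nn_integral_suminf) (auto simp: J_def)
  also have "\<dots> = (\<Sum>i. ennreal ((1/2) ^ (i + m)))"
  proof (rule suminf_cong)
    fix i
    have "(3/2) ^ (i + m) * (1 / 3 ^ (i + m)) = ((1::real)/2) ^ (i + m)"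
      by (simp add: power_divide field_simps)
    thus "(\<integral>\<^sup>+y. ennreal ((3/2) ^ (i + m)) * indicator (J (i + m)) y \<partial>lborel) = ennreal ((1/2) ^ (i + m))"
      using emeasure_lborel_J[of "i + m"] m
      by (subst nn_integral_cmult_indicator) (auto simp: J_def ennreal_mult[symmetric])
  qed
  also have "\<dots> = ennreal ((1/2) ^ m * 2)"
  proof (rule suminf_ennreal_eq)
    have "(\<lambda>i. (1/2::real) ^ m * (1/2) ^ i) sums ((1/2) ^ m * (1 / (1 - 1/2)))"
      by (intro sums_mult geometric_sums) auto
    thus "(\<lambda>i. (1/2::real) ^ (i + m)) sums ((1/2) ^ m * 2)"
      by (simp add: power_add mult.commute)
  qed auto
  finally show ?thesis .
qed

lemma emeasure_P_UNIV: "emeasure P UNIV = 1"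
proof (rule antisym)
  have "emeasure P UNIV = emeasure P Jsupp"
    using AE_in_Jsupp by (intro emeasure_eq_AE) auto
  also have "\<dots> \<le> emeasure P {J0 1..1}"
    using Jsupp_unit by (intro emeasure_mono) (force simp: J0_def)+
  finally show "emeasure P UNIV \<le> 1" using emeasure_P_tail[of 1] by simp
  show "1 \<le> emeasure P UNIV"
    using emeasure_P_tail[of 1] emeasure_mono[of "{J0 1..1}" UNIV P] by simp
qed

interpretation P: finite_measure P
  by standard (simp add: emeasure_P_UNIV)

lemma measure_P_tail: "1 \<le> m \<Longrightarrow> measure P {J0 m..1} = (1/2) ^ m * 2"
  using emeasure_P_tail by (simp add: measure_def)

lemma AE_P_unit: "AE x in P. 0 \<le> x \<and> x < 1"
  using AE_in_Jsupp Jsupp_unit by (auto elim!: eventually_mono)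

lemma integrable_P_bounded:
  fixes h :: "real \<Rightarrow> real"
  assumes [measurable]: "h \<in> borel_measurable borel" and "\<And>x. 0 \<le> x \<Longrightarrow> x < 1 \<Longrightarrow> \<bar>h x\<bar> \<le> B"
  shows "integrable P h"
proof (rule P.integrable_const_bound[where B=B])
  show "AE x in P. norm (h x) \<le> B" using AE_P_unit by eventually_elim (use assms in auto)
qed simp

lemma integrable_indicator_continuous:
  fixes h :: "real \<Rightarrow> real"
  assumes "E \<in> sets borel" "continuous_on UNIV h"
  shows "integrable P (\<lambda>y. indicator E y * h y)"
proof -
  obtain B where "\<forall>x\<in>{0..1}. norm (h x) \<le> B"
    using compact_imp_bounded[OF compact_continuous_image[OF continuous_on_subset[OF assms(2)]]]
    by (auto simp: bounded_iff)
  moreover have "h \<in> borel_measurable borel" using assms borel_measurable_continuous_onI by blast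
  ultimately have "integrable P h" by (intro integrable_P_bounded[of h B]) auto
  thus ?thesis using integrable_mult_indicator[of E P h] assms(1) by simp
qed

lemma integral_P_interval:
  fixes h H :: "real \<Rightarrow> real"
  assumes m: "1 \<le> m" and uv: "u \<le> v" "J0 m \<le> u" "v \<le> J1 m"
    and H: "\<And>x. (H has_real_derivative h x) (at x)" and c: "continuous_on UNIV h"
  shows "(\<integral>y. indicator {u..v} y * h y \<partial>P) = (3/2) ^ m * (H v - H u)"
proof -
  have [measurable]: "h \<in> borel_measurable borel" using c borel_measurable_continuous_onI by blast
  have "(\<integral>y. indicator {u..v} y * h y \<partial>P) = (\<integral>y. dens y * (indicator {u..v} y * h y) \<partial>lborel)"
    unfolding P_def by (subst integral_density) (auto simp: dens_nonneg)
  also have "\<dots> = (\<integral>y. (3/2) ^ m * (indicator {u..v} y * h y) \<partial>lborel)"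
    using uv dens_J[OF m] by (intro Bochner_Integration.integral_cong) (auto simp: J_def split: split_indicator)
  also have "\<dots> = (3/2) ^ m * (\<integral>y. indicator {u..v} y * h y \<partial>lborel)"
    by simp
  also have "(\<integral>y. indicator {u..v} y * h y \<partial>lborel) = H v - H u"
    using integral_FTC_atLeastAtMost[of u v H h] uv H c
    by (auto simp: has_real_derivative_iff_has_vector_derivative[symmetric]
        intro: has_field_derivative_at_within continuous_on_subset)
  finally show ?thesis by simp
qed

definition M0 :: "real set \<Rightarrow> real" where "M0 E = (\<integral>y. indicator E y \<partial>P)"
definition M1 :: "real set \<Rightarrow> real" where "M1 E = (\<integral>y. indicator E y * y \<partial>P)"
definition M2 :: "real set \<Rightarrow> real" where "M2 E = (\<integral>y. indicator E y * y\<^sup>2 \<partial>P)"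

lemma integrable_indicator_moments:
  assumes "E \<in> sets borel"
  shows "integrable P (\<lambda>y. indicator E y :: real)" "integrable P (\<lambda>y. indicator E y * y)"
    "integrable P (\<lambda>y. indicator E y * y\<^sup>2)"
  using integrable_indicator_continuous[OF assms, of "\<lambda>_. 1"]
    integrable_indicator_continuous[OF assms, of "\<lambda>y. y"]
    integrable_indicator_continuous[OF assms, of "\<lambda>y. y\<^sup>2"]
  by (auto simp: continuous_on_power continuous_on_id)

lemma M_square_expand:
  assumes "E \<in> sets borel"
  shows "(\<integral>y. indicator E y * (y - c)\<^sup>2 \<partial>P) = M2 E - 2 * c * M1 E + c\<^sup>2 * M0 E"
proof -
  have "(\<lambda>y. indicator E y * (y - c)\<^sup>2)
      = (\<lambda>y. indicator E y * y\<^sup>2 - 2 * c * (indicator E y * y) + c\<^sup>2 * indicator E y)"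
    by (auto simp: fun_eq_iff power2_eq_square algebra_simps)
  thus ?thesis using integrable_indicator_moments[OF assms] by (simp add: M0_def M1_def M2_def)
qed

lemma M0_eq_measure: "E \<in> sets borel \<Longrightarrow> M0 E = measure P E"
  unfolding M0_def by simp

lemma M0_nonneg: "0 \<le> M0 E"
  unfolding M0_def by (rule integral_nonneg_AE) auto

lemma M0_tail: "1 \<le> m \<Longrightarrow> M0 {J0 m..1} = (1/2) ^ m * 2"
  using measure_P_tail[of m] by (simp add: M0_eq_measure)

lemma integral_indicator_cong:
  fixes h :: "real \<Rightarrow> real"
  assumes [measurable]: "E \<in> sets borel" "F \<in> sets borel" "h \<in> borel_measurable borel"
    and eq: "\<And>y. y \<in> Jsupp \<Longrightarrow> y \<noteq> z \<Longrightarrow> y \<in> E \<longleftrightarrow> y \<in> F"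
  shows "(\<integral>y. indicator E y * h y \<partial>P) = (\<integral>y. indicator F y * h y \<partial>P)"
proof (rule integral_cong_AE)
  show "AE y in P. indicator E y * h y = indicator F y * h y"
    using AE_in_Jsupp AE_P_neq[of z] by eventually_elim (use eq in \<open>auto split: split_indicator\<close>)
qed auto

lemma M_cong:
  assumes "E \<in> sets borel" "F \<in> sets borel" "\<And>y. y \<in> Jsupp \<Longrightarrow> y \<noteq> z \<Longrightarrow> y \<in> E \<longleftrightarrow> y \<in> F"
  shows "M0 E = M0 F" "M1 E = M1 F" "M2 E = M2 F"
  using integral_indicator_cong[OF assms(1,2) _ assms(3), of "\<lambda>_. 1"]
    integral_indicator_cong[OF assms(1,2) _ assms(3), of "\<lambda>y. y"]
    integral_indicator_cong[OF assms(1,2) _ assms(3), of "\<lambda>y. y\<^sup>2"]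
  unfolding M0_def M1_def M2_def by auto

lemma M_add:
  assumes "E \<in> sets borel" "F \<in> sets borel" and disj: "E \<inter> F = {}"
  shows "M0 (E \<union> F) = M0 E + M0 F" "M1 (E \<union> F) = M1 E + M1 F" "M2 (E \<union> F) = M2 E + M2 F"
proof -
  have ind: "indicator (E \<union> F) y = (indicator E y + indicator F y :: real)" for y
    using disj by (auto split: split_indicator)
  show "M0 (E \<union> F) = M0 E + M0 F" "M1 (E \<union> F) = M1 E + M1 F" "M2 (E \<union> F) = M2 E + M2 F"
    unfolding M0_def M1_def M2_def ind
    using integrable_indicator_moments[OF assms(1)] integrable_indicator_moments[OF assms(2)]
    by (simp_all add: distrib_right)
qed

lemma M_split:
  assumes "E \<in> sets borel" "A \<in> sets borel" "B \<in> sets borel" "A \<inter> B = {}"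
    and "\<And>y. y \<in> Jsupp \<Longrightarrow> y \<noteq> z \<Longrightarrow> y \<in> E \<longleftrightarrow> y \<in> A \<union> B"
  shows "M0 E = M0 A + M0 B" "M1 E = M1 A + M1 B" "M2 E = M2 A + M2 B"
  using M_cong[of E "A \<union> B" z] M_add[of A B] assms by auto

lemma M_open_left: "M0 {m<..v} = M0 {m..v}" "M1 {m<..v} = M1 {m..v}" "M2 {m<..v} = M2 {m..v}"
  by (rule M_cong[where z = m]; auto)+

lemma M_interval_split:
  assumes "u \<le> m" "m \<le> v"
  shows "M0 {u..v} = M0 {u..m} + M0 {m..v}" "M1 {u..v} = M1 {u..m} + M1 {m..v}"
    "M2 {u..v} = M2 {u..m} + M2 {m..v}"
proof -
  note M_open_left[of m v]
  moreover have "M0 {u..v} = M0 {u..m} + M0 {m<..v}" "M1 {u..v} = M1 {u..m} + M1 {m<..v}"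
    "M2 {u..v} = M2 {u..m} + M2 {m<..v}"
    by (rule M_split[where z = m]; use assms in auto)+
  ultimately show "M0 {u..v} = M0 {u..m} + M0 {m..v}" "M1 {u..v} = M1 {u..m} + M1 {m..v}"
    "M2 {u..v} = M2 {u..m} + M2 {m..v}" by auto
qed

lemma M1_bounds:
  assumes [measurable]: "E \<in> sets borel" and h: "\<And>y. y \<in> Jsupp \<Longrightarrow> y \<in> E \<Longrightarrow> u \<le> y \<and> y \<le> v"
  shows "u * M0 E \<le> M1 E" "M1 E \<le> v * M0 E"
proof -
  have i0: "integrable P (\<lambda>y. indicator E y * u)" "integrable P (\<lambda>y. indicator E y * v)"
    using integrable_indicator_continuous[of E "\<lambda>_. u"] integrable_indicator_continuous[of E "\<lambda>_. v"] by auto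
  note i1 = integrable_indicator_moments(2)[OF assms(1)]
  have "(\<integral>y. indicator E y * u \<partial>P) \<le> M1 E" unfolding M1_def
    by (rule integral_mono_AE[OF i0(1) i1]) (use AE_in_Jsupp h in \<open>auto elim!: eventually_mono split: split_indicator\<close>)
  thus "u * M0 E \<le> M1 E" unfolding M0_def by (simp add: mult.commute)
  have "M1 E \<le> (\<integral>y. indicator E y * v \<partial>P)" unfolding M1_def
    by (rule integral_mono_AE[OF i1 i0(2)]) (use AE_in_Jsupp h in \<open>auto elim!: eventually_mono split: split_indicator\<close>)
  thus "M1 E \<le> v * M0 E" unfolding M0_def by (simp add: mult.commute)
qed

lemma M1_bounds_except:
  assumes "E \<in> sets borel" and h: "\<And>y. y \<in> Jsupp \<Longrightarrow> y \<noteq> z \<Longrightarrow> y \<in> E \<Longrightarrow> u \<le> y \<and> y \<le> v"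
  shows "u * M0 E \<le> M1 E" "M1 E \<le> v * M0 E"
proof -
  have "M0 E = M0 (E - {z})" "M1 E = M1 (E - {z})"
    using M_cong[of E "E - {z}" z] assms by auto
  moreover have "u * M0 (E - {z}) \<le> M1 (E - {z})" "M1 (E - {z}) \<le> v * M0 (E - {z})"
    by (rule M1_bounds; use assms in auto)+
  ultimately show "u * M0 E \<le> M1 E" "M1 E \<le> v * M0 E" by auto
qed

lemma abs_M1_le_M0:
  assumes "E \<in> sets borel"
  shows "\<bar>M1 E\<bar> \<le> M0 E"
  using M1_bounds[OF assms, of "-1" 1] Jsupp_unit by force

lemma M0_mono:
  assumes "E \<in> sets borel" "F \<in> sets borel" and h: "\<And>y. y \<in> Jsupp \<Longrightarrow> y \<in> E \<Longrightarrow> y \<in> F"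
  shows "M0 E \<le> M0 F"
  unfolding M0_def
proof (rule integral_mono_AE)
  show "integrable P (indicat_real E)" "integrable P (indicat_real F)"
    using integrable_indicator_moments(1) assms by auto
  show "AE x in P. indicat_real E x \<le> indicat_real F x"
    using AE_in_Jsupp by eventually_elim (use h in \<open>auto split: split_indicator\<close>)
qed

lemma M0_degenerate: "v \<le> u \<Longrightarrow> M0 {u..v} = 0"
proof -
  assume "v \<le> u"
  hence "M0 {u..v} \<le> M0 {u}" by (intro M0_mono) auto
  moreover have "M0 {u} = 0"
    using emeasure_P_singleton[of u] by (simp add: M0_eq_measure P.emeasure_eq_measure)
  ultimately show ?thesis using M0_nonneg[of "{u..v}"] by simp
qed

lemma M_J_interval:
  assumes "1 \<le> m" "u \<le> v" "J0 m \<le> u" "v \<le> J1 m"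
  shows "M0 {u..v} = (3/2) ^ m * (v - u)" "M1 {u..v} = (3/2) ^ m * ((v\<^sup>2 - u\<^sup>2) / 2)"
proof -
  show "M0 {u..v} = (3/2) ^ m * (v - u)"
    unfolding M0_def using integral_P_interval[OF assms, of "\<lambda>x. x" "\<lambda>_. 1"]
    by (auto intro!: derivative_eq_intros)
  have "((\<lambda>x. x\<^sup>2/2) has_real_derivative x) (at x)" for x :: real
    by (auto intro!: derivative_eq_intros)
  thus "M1 {u..v} = (3/2) ^ m * ((v\<^sup>2 - u\<^sup>2) / 2)"
    unfolding M1_def using integral_P_interval[OF assms, of "\<lambda>x. x\<^sup>2/2" "\<lambda>x. x"]
    by (simp add: continuous_on_id diff_divide_distrib)
qed

section \<open>Quantization error and the optimality conditions\<close>

definition dmin :: "real set \<Rightarrow> real \<Rightarrow> real" where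
  "dmin \<alpha> x = Min ((\<lambda>a. (x - a)\<^sup>2) ` \<alpha>)"

definition qerror :: "real set \<Rightarrow> real" where
  "qerror \<alpha> = (\<integral>x. dmin \<alpha> x \<partial>P)"

lemma dmin_le: "finite \<alpha> \<Longrightarrow> a \<in> \<alpha> \<Longrightarrow> dmin \<alpha> x \<le> (x - a)\<^sup>2"
  unfolding dmin_def by (intro Min_le) auto

lemma dmin_attained: "finite \<alpha> \<Longrightarrow> \<alpha> \<noteq> {} \<Longrightarrow> \<exists>a\<in>\<alpha>. dmin \<alpha> x = (x - a)\<^sup>2"
proof -
  assume "finite \<alpha>" "\<alpha> \<noteq> {}"
  hence "Min ((\<lambda>a. (x - a)\<^sup>2) ` \<alpha>) \<in> (\<lambda>a. (x - a)\<^sup>2) ` \<alpha>" by (intro Min_in) auto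
  thus ?thesis unfolding dmin_def by auto
qed

lemma dmin_nonneg: "finite \<alpha> \<Longrightarrow> \<alpha> \<noteq> {} \<Longrightarrow> 0 \<le> dmin \<alpha> x"
  using dmin_attained[of \<alpha> x] by auto

lemma dmin_antimono: "finite \<beta> \<Longrightarrow> \<alpha> \<subseteq> \<beta> \<Longrightarrow> \<alpha> \<noteq> {} \<Longrightarrow> dmin \<beta> x \<le> dmin \<alpha> x"
proof -
  assume h: "finite \<beta>" "\<alpha> \<subseteq> \<beta>" "\<alpha> \<noteq> {}"
  then obtain a where a: "a \<in> \<alpha>" "dmin \<alpha> x = (x - a)\<^sup>2"
    using dmin_attained[of \<alpha> x] finite_subset by blast
  thus ?thesis using dmin_le[OF h(1), of a x] h(2) by auto
qed

lemma dmin_eq_nearest: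
  assumes "finite \<alpha>" "a \<in> \<alpha>" "\<forall>c\<in>\<alpha>. (y - a)\<^sup>2 \<le> (y - c)\<^sup>2"
  shows "dmin \<alpha> y = (y - a)\<^sup>2"
proof -
  obtain c where "c \<in> \<alpha>" "dmin \<alpha> y = (y - c)\<^sup>2" using dmin_attained[of \<alpha> y] assms by auto
  thus ?thesis using dmin_le[OF assms(1,2), of y] assms(3) by force
qed

lemma nearer_outside:
  assumes "finite \<alpha>" "c \<in> \<alpha> - U" "\<forall>u\<in>U. (y - c)\<^sup>2 \<le> (y - u)\<^sup>2"
  shows "\<exists>c\<in>\<alpha> - U. (y - c)\<^sup>2 \<le> dmin \<alpha> y"
proof -
  obtain d where d: "d \<in> \<alpha>" "dmin \<alpha> y = (y - d)\<^sup>2" using dmin_attained[of \<alpha> y] assms by auto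
  show ?thesis
  proof (cases "d \<in> U")
    case True thus ?thesis using assms d by force
  next
    case False thus ?thesis using d by force
  qed
qed

lemma borel_measurable_dmin[measurable]: "finite \<alpha> \<Longrightarrow> dmin \<alpha> \<in> borel_measurable borel"
  unfolding dmin_def[abs_def] by measurable

lemma integrable_dmin: "finite \<alpha> \<Longrightarrow> \<alpha> \<noteq> {} \<Longrightarrow> integrable P (dmin \<alpha>)"
proof -
  assume f: "finite \<alpha>" "\<alpha> \<noteq> {}"
  then obtain a where a: "a \<in> \<alpha>" by auto
  show ?thesis
  proof (rule integrable_P_bounded[where B="(1 + \<bar>a\<bar>)\<^sup>2"])
    fix x :: real assume x: "0 \<le> x" "x < 1"
    have "\<bar>dmin \<alpha> x\<bar> \<le> (x - a)\<^sup>2" using dmin_nonneg[OF f] dmin_le[OF f(1) a] by simp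
    also have "\<dots> = \<bar>x - a\<bar>\<^sup>2" by simp
    also have "\<dots> \<le> (1 + \<bar>a\<bar>)\<^sup>2" using x by (intro power_mono) auto
    finally show "\<bar>dmin \<alpha> x\<bar> \<le> (1 + \<bar>a\<bar>)\<^sup>2" .
  qed (use f in simp)
qed

lemma integrable_indicator_dmin:
  "R \<in> sets borel \<Longrightarrow> finite \<alpha> \<Longrightarrow> \<alpha> \<noteq> {} \<Longrightarrow> integrable P (\<lambda>y. indicator R y * dmin \<alpha> y)"
  using integrable_mult_indicator[of R P "dmin \<alpha>"] integrable_dmin[of \<alpha>] by simp

lemma distortion_eq_qerror: "finite \<alpha> \<Longrightarrow> \<alpha> \<noteq> {} \<Longrightarrow> distortion \<alpha> = ennreal (qerror \<alpha>)"
  unfolding distortion_def qerror_def dmin_def[symmetric]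
  by (rule nn_integral_eq_integral[OF integrable_dmin]) (auto simp: dmin_nonneg)

lemma optimal_qerror_le:
  assumes "optimal_n_means n \<alpha>" "finite \<beta>" "\<beta> \<noteq> {}" "card \<beta> \<le> n"
  shows "qerror \<alpha> \<le> qerror \<beta>"
proof -
  have "distortion \<alpha> \<le> distortion \<beta>" using assms unfolding optimal_n_means_def by auto
  moreover have "0 \<le> qerror \<beta>"
    unfolding qerror_def using assms by (intro integral_nonneg_AE) (auto simp: dmin_nonneg)
  ultimately show ?thesis using assms unfolding optimal_n_means_def by (auto simp: distortion_eq_qerror)
qed

lemma card_replace:
  assumes "finite \<alpha>" "U \<subseteq> \<alpha>" "card (V - (\<alpha> - U)) \<le> card U"
  shows "card ((\<alpha> - U) \<union> V) \<le> card \<alpha>"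
proof -
  have "(\<alpha> - U) \<union> V = (\<alpha> - U) \<union> (V - (\<alpha> - U))" by blast
  hence "card ((\<alpha> - U) \<union> V) \<le> card (\<alpha> - U) + card (V - (\<alpha> - U))"
    by (metis card_Un_le)
  also have "card (\<alpha> - U) = card \<alpha> - card U"
    using assms by (intro card_Diff_subset) (auto intro: finite_subset)
  finally show ?thesis using assms card_mono[of \<alpha> U] by linarith
qed

lemma optimal_local_replacement:
  assumes opt: "optimal_n_means n \<alpha>" and V: "finite V" "V \<noteq> {}"
    and U: "U \<subseteq> \<alpha>" "card (V - (\<alpha> - U)) \<le> card U" and R[measurable]: "R \<in> sets borel"
    and out: "AE y in P. y \<notin> R \<longrightarrow> (\<exists>c\<in>\<alpha> - U. (y - c)\<^sup>2 \<le> dmin \<alpha> y)"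
  shows "(\<integral>y. indicator R y * dmin \<alpha> y \<partial>P) \<le> (\<integral>y. indicator R y * dmin V y \<partial>P)"
proof -
  have fa: "finite \<alpha>" "\<alpha> \<noteq> {}" "card \<alpha> \<le> n" using opt unfolding optimal_n_means_def by auto
  define \<beta> where "\<beta> = (\<alpha> - U) \<union> V"
  have fb: "finite \<beta>" "\<beta> \<noteq> {}" "card \<beta> \<le> n"
    using fa V card_replace[OF fa(1) U] unfolding \<beta>_def by auto
  note iV = integrable_indicator_dmin[OF R V] and iA = integrable_indicator_dmin[OF R fa(1,2)]
  define g where "g y = indicator R y * dmin V y + (dmin \<alpha> y - indicator R y * dmin \<alpha> y)" for y
  have "qerror \<alpha> \<le> qerror \<beta>" using optimal_qerror_le[OF opt fb] .
  also have "qerror \<beta> \<le> (\<integral>y. g y \<partial>P)"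
    unfolding qerror_def
  proof (rule integral_mono_AE)
    show "integrable P (dmin \<beta>)" using integrable_dmin[OF fb(1,2)] .
    show "integrable P g"
      unfolding g_def using iV iA integrable_dmin[OF fa(1,2)] by auto
    show "AE y in P. dmin \<beta> y \<le> g y"
      using out
    proof eventually_elim
      case (elim y)
      show ?case
      proof (cases "y \<in> R")
        case True
        have "dmin \<beta> y \<le> dmin V y" by (rule dmin_antimono[OF fb(1) _ V(2)]) (auto simp: \<beta>_def)
        thus ?thesis using True by (simp add: g_def)
      next
        case False
        then obtain c where c: "c \<in> \<alpha> - U" "(y - c)\<^sup>2 \<le> dmin \<alpha> y" using elim by blast
        hence "dmin \<beta> y \<le> (y - c)\<^sup>2" by (intro dmin_le[OF fb(1)]) (auto simp: \<beta>_def)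
        thus ?thesis using c False by (simp add: g_def)
      qed
    qed
  qed
  also have "(\<integral>y. g y \<partial>P)
      = (\<integral>y. indicator R y * dmin V y \<partial>P) + (qerror \<alpha> - (\<integral>y. indicator R y * dmin \<alpha> y \<partial>P))"
    unfolding g_def qerror_def using iV iA integrable_dmin[OF fa(1,2)] by simp
  finally show ?thesis by simp
qed

lemma quadratic_minimizer:
  fixes f m a :: real
  assumes "\<bar>f\<bar> \<le> m" and min: "\<And>c. a\<^sup>2 * m - 2 * a * f \<le> c\<^sup>2 * m - 2 * c * f"
  shows "f = a * m"
proof (cases "m = 0")
  case True thus ?thesis using assms by simp
next
  case False
  hence m: "m > 0" using assms by simp
  have "m * (a\<^sup>2 * m - 2 * a * f) \<le> m * ((f/m)\<^sup>2 * m - 2 * (f/m) * f)"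
    using min[of "f/m"] m by (intro mult_left_mono) auto
  also have "m * ((f/m)\<^sup>2 * m - 2 * (f/m) * f) = - f\<^sup>2"
    using m by (simp add: power2_eq_square field_simps)
  finally have "(a * m - f)\<^sup>2 \<le> 0" by (simp add: power2_eq_square algebra_simps)
  thus "f = a * m" by simp
qed

lemma centroid_condition:
  assumes opt: "optimal_n_means n \<alpha>" and a: "a \<in> \<alpha>" and R[measurable]: "R \<in> sets borel"
    and inR: "AE y in P. y \<in> R \<longrightarrow> dmin \<alpha> y = (y - a)\<^sup>2"
    and out: "AE y in P. y \<notin> R \<longrightarrow> (\<exists>c\<in>\<alpha> - {a}. (y - c)\<^sup>2 \<le> dmin \<alpha> y)"
  shows "M1 R = a * M0 R"
proof (rule quadratic_minimizer[OF abs_M1_le_M0[OF R]])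
  fix c
  have "(\<integral>y. indicator R y * dmin \<alpha> y \<partial>P) \<le> (\<integral>y. indicator R y * dmin {c} y \<partial>P)"
    by (rule optimal_local_replacement[OF opt _ _ _ _ R out]) (use a card_mono[of "{c}" "{c} - (\<alpha> - {a})"] in auto)
  moreover have "(\<integral>y. indicator R y * dmin \<alpha> y \<partial>P) = (\<integral>y. indicator R y * (y - a)\<^sup>2 \<partial>P)"
  proof (rule integral_cong_AE)
    show "AE y in P. indicator R y * dmin \<alpha> y = indicator R y * (y - a)\<^sup>2"
      using inR by eventually_elim (simp split: split_indicator)
  qed (use opt in \<open>auto simp: optimal_n_means_def\<close>)
  moreover have "dmin {c} y = (y - c)\<^sup>2" for y by (simp add: dmin_def)
  ultimately have "M2 R - 2 * a * M1 R + a\<^sup>2 * M0 R \<le> M2 R - 2 * c * M1 R + c\<^sup>2 * M0 R"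
    using M_square_expand[OF R] by simp
  thus "a\<^sup>2 * M0 R - 2 * a * M1 R \<le> c\<^sup>2 * M0 R - 2 * c * M1 R" by simp
qed

section \<open>Voronoi cells on the line\<close>

lemma finite_predecessor_cases:
  fixes \<alpha> :: "real set"
  assumes "finite \<alpha>"
  shows "(\<forall>c\<in>\<alpha>. a \<le> c) \<or> (\<exists>p\<in>\<alpha>. p < a \<and> (\<forall>c\<in>\<alpha>. c < a \<longrightarrow> c \<le> p))"
proof (cases "\<exists>c\<in>\<alpha>. c < a")
  case True
  define S where "S = {c\<in>\<alpha>. c < a}"
  have "finite S" "S \<noteq> {}" using assms True by (auto simp: S_def)
  hence "Max S \<in> S" by (rule Max_in)
  moreover have "\<forall>c\<in>\<alpha>. c < a \<longrightarrow> c \<le> Max S" using \<open>finite S\<close> by (auto simp: S_def)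
  ultimately show ?thesis by (auto simp: S_def)
qed auto

lemma finite_successor_cases:
  fixes \<alpha> :: "real set"
  assumes "finite \<alpha>"
  shows "(\<forall>c\<in>\<alpha>. c \<le> a) \<or> (\<exists>q\<in>\<alpha>. a < q \<and> (\<forall>c\<in>\<alpha>. a < c \<longrightarrow> q \<le> c))"
proof (cases "\<exists>c\<in>\<alpha>. a < c")
  case True
  define S where "S = {c\<in>\<alpha>. a < c}"
  have "finite S" "S \<noteq> {}" using assms True by (auto simp: S_def)
  hence "Min S \<in> S" by (rule Min_in)
  moreover have "\<forall>c\<in>\<alpha>. a < c \<longrightarrow> Min S \<le> c" using \<open>finite S\<close> by (auto simp: S_def)
  ultimately show ?thesis by (auto simp: S_def)
qed auto

lemma abs_less_iff_square_less: "\<bar>x::real\<bar> < \<bar>y\<bar> \<longleftrightarrow> x\<^sup>2 < y\<^sup>2"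
  using abs_le_square_iff[of y x] by linarith

lemma square_dist_le_iff: "((y::real) - a)\<^sup>2 \<le> (y - c)\<^sup>2 \<longleftrightarrow> (c - a) * (2 * y - a - c) \<le> 0"
  by (simp add: power2_eq_square algebra_simps)

lemma square_dist_less_iff: "((y::real) - a)\<^sup>2 < (y - c)\<^sup>2 \<longleftrightarrow> (c - a) * (2 * y - a - c) < 0"
  by (simp add: power2_eq_square algebra_simps)

lemma closer_left: "(c::real) < a \<Longrightarrow> a + c \<le> 2 * y \<Longrightarrow> (y - a)\<^sup>2 \<le> (y - c)\<^sup>2"
  unfolding square_dist_le_iff by (rule mult_nonpos_nonneg) auto

lemma closer_left_strict: "(c::real) < a \<Longrightarrow> 2 * y < a + c \<Longrightarrow> (y - c)\<^sup>2 < (y - a)\<^sup>2"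
  unfolding square_dist_less_iff by (rule mult_pos_neg) auto

lemma closer_right: "(a::real) < c \<Longrightarrow> 2 * y \<le> a + c \<Longrightarrow> (y - a)\<^sup>2 \<le> (y - c)\<^sup>2"
  unfolding square_dist_le_iff by (rule mult_nonneg_nonpos) auto

lemma closer_right_strict: "(a::real) < c \<Longrightarrow> a + c < 2 * y \<Longrightarrow> (y - c)\<^sup>2 < (y - a)\<^sup>2"
  unfolding square_dist_less_iff by (rule mult_neg_pos) auto

text \<open>The cell of a within [0,1] is [l, r]: l is the midpoint to the left neighbour of a, or any
  l \<le> min 0 a if there is none; symmetrically for r.\<close>

definition left_boundary :: "real set \<Rightarrow> real \<Rightarrow> real \<Rightarrow> bool" where
  "left_boundary \<alpha> a l \<longleftrightarrow> l \<le> a \<and> (\<forall>y. l \<le> y \<longrightarrow> (\<forall>c\<in>\<alpha>. c < a \<longrightarrow> (y - a)\<^sup>2 \<le> (y - c)\<^sup>2))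
     \<and> (\<forall>y. y < l \<longrightarrow> 0 \<le> y \<longrightarrow> (\<exists>c\<in>\<alpha>. c < a \<and> (y - c)\<^sup>2 < (y - a)\<^sup>2))"

definition right_boundary :: "real set \<Rightarrow> real \<Rightarrow> real \<Rightarrow> bool" where
  "right_boundary \<alpha> a r \<longleftrightarrow> a \<le> r \<and> (\<forall>y. y \<le> r \<longrightarrow> (\<forall>c\<in>\<alpha>. a < c \<longrightarrow> (y - a)\<^sup>2 \<le> (y - c)\<^sup>2))
     \<and> (\<forall>y. r < y \<longrightarrow> y \<le> 1 \<longrightarrow> (\<exists>c\<in>\<alpha>. a < c \<and> (y - c)\<^sup>2 < (y - a)\<^sup>2))"

lemma left_boundary_midpoint:
  assumes "p \<in> \<alpha>" "p < a" "\<forall>c\<in>\<alpha>. c < a \<longrightarrow> c \<le> p"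
  shows "left_boundary \<alpha> a ((p + a) / 2)"
  unfolding left_boundary_def
proof (intro conjI allI impI ballI)
  fix y c assume "(p + a) / 2 \<le> y" "c \<in> \<alpha>" "c < a"
  thus "(y - a)\<^sup>2 \<le> (y - c)\<^sup>2" using assms by (intro closer_left) auto
next
  fix y assume "y < (p + a) / 2"
  thus "\<exists>c\<in>\<alpha>. c < a \<and> (y - c)\<^sup>2 < (y - a)\<^sup>2" using assms closer_left_strict[of p a y] by auto
qed (use assms in simp)

lemma right_boundary_midpoint:
  assumes "q \<in> \<alpha>" "a < q" "\<forall>c\<in>\<alpha>. a < c \<longrightarrow> q \<le> c"
  shows "right_boundary \<alpha> a ((a + q) / 2)"
  unfolding right_boundary_def
proof (intro conjI allI impI ballI)
  fix y c assume "y \<le> (a + q) / 2" "c \<in> \<alpha>" "a < c"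
  thus "(y - a)\<^sup>2 \<le> (y - c)\<^sup>2" using assms by (intro closer_right) auto
next
  fix y assume "(a + q) / 2 < y"
  thus "\<exists>c\<in>\<alpha>. a < c \<and> (y - c)\<^sup>2 < (y - a)\<^sup>2" using assms closer_right_strict[of a q y] by auto
qed (use assms in simp)

lemma left_boundary_exists: "finite \<alpha> \<Longrightarrow> \<exists>l. left_boundary \<alpha> a l"
proof -
  assume "finite \<alpha>"
  from finite_predecessor_cases[OF this, of a] show ?thesis
  proof
    assume "\<forall>c\<in>\<alpha>. a \<le> c"
    hence "left_boundary \<alpha> a (min 0 a)" unfolding left_boundary_def by force
    thus ?thesis ..
  next
    assume "\<exists>p\<in>\<alpha>. p < a \<and> (\<forall>c\<in>\<alpha>. c < a \<longrightarrow> c \<le> p)"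
    thus ?thesis using left_boundary_midpoint by blast
  qed
qed

lemma right_boundary_exists: "finite \<alpha> \<Longrightarrow> \<exists>r. right_boundary \<alpha> a r"
proof -
  assume "finite \<alpha>"
  from finite_successor_cases[OF this, of a] show ?thesis
  proof
    assume "\<forall>c\<in>\<alpha>. c \<le> a"
    hence "right_boundary \<alpha> a (max 1 a)" unfolding right_boundary_def by force
    thus ?thesis ..
  next
    assume "\<exists>q\<in>\<alpha>. a < q \<and> (\<forall>c\<in>\<alpha>. a < c \<longrightarrow> q \<le> c)"
    thus ?thesis using right_boundary_midpoint by blast
  qed
qed

lemma cell_nearest:
  assumes "left_boundary \<alpha> a l" "right_boundary \<alpha> a r" "l \<le> y" "y \<le> r" "c \<in> \<alpha>"
  shows "(y - a)\<^sup>2 \<le> (y - c)\<^sup>2"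
  using assms unfolding left_boundary_def right_boundary_def by (cases "c < a"; cases "a < c") auto

lemma outside_cell_nearer:
  assumes "left_boundary \<alpha> a l" "right_boundary \<alpha> a r" "0 \<le> y" "y \<le> 1" "\<not> (l \<le> y \<and> y \<le> r)"
  shows "\<exists>c\<in>\<alpha> - {a}. (y - c)\<^sup>2 \<le> (y - a)\<^sup>2"
proof (cases "y < l")
  case True
  then obtain c where "c \<in> \<alpha>" "c < a" "(y - c)\<^sup>2 < (y - a)\<^sup>2"
    using assms unfolding left_boundary_def by blast
  thus ?thesis by (intro bexI[of _ c]) auto
next
  case False
  hence "r < y" using assms by auto
  then obtain c where "c \<in> \<alpha>" "a < c" "(y - c)\<^sup>2 < (y - a)\<^sup>2"
    using assms unfolding right_boundary_def by blast
  thus ?thesis by (intro bexI[of _ c]) auto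
qed

lemma exists_isolated_interval:
  fixes \<alpha> :: "real set"
  assumes "finite \<alpha>"
  obtains \<epsilon> z where "0 < \<epsilon>" "0 \<le> z - \<epsilon>" "z + \<epsilon> \<le> 1/3"
    "\<And>y c. \<bar>y - z\<bar> \<le> \<epsilon> \<Longrightarrow> c \<in> \<alpha> \<Longrightarrow> 9 * \<epsilon>\<^sup>2 \<le> (y - c)\<^sup>2"
proof -
  have "infinite {0<..<1/3::real}" by simp
  hence "\<not> {0<..<1/3::real} \<subseteq> \<alpha>" using assms finite_subset by blast
  then obtain z where z: "z \<in> {0<..<1/3::real}" "z \<notin> \<alpha>" by blast
  define \<delta> where "\<delta> = Min (insert 1 ((\<lambda>c. \<bar>z - c\<bar>) ` \<alpha>))"
  have fin: "finite (insert 1 ((\<lambda>c. \<bar>z - c\<bar>) ` \<alpha>))" using assms by simp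
  have \<delta>: "0 < \<delta>" "\<And>c. c \<in> \<alpha> \<Longrightarrow> \<delta> \<le> \<bar>z - c\<bar>"
    unfolding \<delta>_def using fin z by (auto simp: Min_gr_iff)
  define \<epsilon> where "\<epsilon> = min (\<delta>/4) (min (z/2) ((1/3 - z)/2))"
  have \<epsilon>: "0 < \<epsilon>" "\<epsilon> \<le> \<delta>/4" "\<epsilon> \<le> z/2" "\<epsilon> \<le> (1/3 - z)/2"
    unfolding \<epsilon>_def using \<delta> z by (auto simp: min_def)
  show ?thesis
  proof (rule that[of \<epsilon> z])
    fix y c assume y: "\<bar>y - z\<bar> \<le> \<epsilon>" and c: "c \<in> \<alpha>"
    have "3 * \<epsilon> \<le> \<bar>y - c\<bar>" using \<delta>(2)[OF c] \<epsilon> y by linarith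
    hence "(3 * \<epsilon>)\<^sup>2 \<le> \<bar>y - c\<bar>\<^sup>2" using \<epsilon> by (intro power_mono) auto
    thus "9 * \<epsilon>\<^sup>2 \<le> (y - c)\<^sup>2" by (simp add: power_mult_distrib)
  qed (use \<epsilon> z in auto)
qed

text \<open>If the region served by a carried no mass, moving a to a point z far from \<alpha> would strictly
  reduce the error near z.\<close>

lemma optimal_region_mass_pos:
  assumes opt: "optimal_n_means n \<alpha>" and a: "a \<in> \<alpha>" and R[measurable]: "R \<in> sets borel"
    and out: "AE y in P. y \<notin> R \<longrightarrow> (\<exists>c\<in>\<alpha> - {a}. (y - c)\<^sup>2 \<le> dmin \<alpha> y)"
  shows "0 < M0 R"
proof (rule ccontr)
  have fa: "finite \<alpha>" "\<alpha> \<noteq> {}" using opt unfolding optimal_n_means_def by auto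
  assume "\<not> 0 < M0 R"
  hence "measure P R = 0" using measure_nonneg[of P R] by (simp add: M0_eq_measure)
  hence nul: "AE y in P. y \<notin> R" by (intro AE_not_in) (simp add: P.emeasure_eq_measure null_sets_def)
  obtain \<epsilon> z where \<epsilon>: "0 < \<epsilon>" "0 \<le> z - \<epsilon>" "z + \<epsilon> \<le> 1/3"
    and far: "\<And>y c. \<bar>y - z\<bar> \<le> \<epsilon> \<Longrightarrow> c \<in> \<alpha> \<Longrightarrow> 9 * \<epsilon>\<^sup>2 \<le> (y - c)\<^sup>2"
    using exists_isolated_interval[OF fa(1)] by blast
  define W where "W = {z - \<epsilon> .. z + \<epsilon>}"
  have [measurable]: "W \<in> sets borel" by (simp add: W_def)
  have "card ({z} - (\<alpha> - {a})) \<le> card {a}"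
    using card_mono[of "{z}" "{z} - (\<alpha> - {a})"] by auto
  moreover have "AE y in P. y \<notin> R \<union> W \<longrightarrow> (\<exists>c\<in>\<alpha> - {a}. (y - c)\<^sup>2 \<le> dmin \<alpha> y)"
    using out by eventually_elim auto
  ultimately have "(\<integral>y. indicator (R \<union> W) y * dmin \<alpha> y \<partial>P)
      \<le> (\<integral>y. indicator (R \<union> W) y * dmin {z} y \<partial>P)"
    using a by (intro optimal_local_replacement[OF opt]) auto
  moreover have "(\<integral>y. indicator (R \<union> W) y * dmin \<alpha> y \<partial>P) = (\<integral>y. indicator W y * dmin \<alpha> y \<partial>P)"
    by (rule integral_cong_AE)
      (use nul borel_measurable_dmin[OF fa(1)] in \<open>auto elim!: eventually_mono split: split_indicator\<close>)
  moreover have "(\<integral>y. indicator (R \<union> W) y * (y - z)\<^sup>2 \<partial>P) = (\<integral>y. indicator W y * (y - z)\<^sup>2 \<partial>P)"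
    by (rule integral_cong_AE) (use nul in \<open>auto elim!: eventually_mono split: split_indicator\<close>)
  moreover have "dmin {z} = (\<lambda>y. (y - z)\<^sup>2)" by (simp add: fun_eq_iff dmin_def)
  ultimately have le: "(\<integral>y. indicator W y * dmin \<alpha> y \<partial>P) \<le> (\<integral>y. indicator W y * (y - z)\<^sup>2 \<partial>P)"
    by simp
  have "(\<integral>y. indicator W y * (9 * \<epsilon>\<^sup>2) \<partial>P) \<le> (\<integral>y. indicator W y * dmin \<alpha> y \<partial>P)"
  proof (rule integral_mono)
    fix y
    show "indicator W y * (9 * \<epsilon>\<^sup>2) \<le> indicator W y * dmin \<alpha> y"
      using dmin_attained[OF fa, of y] far by (auto simp: W_def abs_le_iff split: split_indicator)
  qed (use integrable_indicator_continuous[of W "\<lambda>_. 9 * \<epsilon>\<^sup>2"] integrable_indicator_dmin[OF _ fa] in auto)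
  also note le
  also have "(\<integral>y. indicator W y * (y - z)\<^sup>2 \<partial>P) \<le> (\<integral>y. indicator W y * \<epsilon>\<^sup>2 \<partial>P)"
  proof (rule integral_mono)
    fix y
    have "\<bar>y - z\<bar> \<le> \<epsilon> \<Longrightarrow> \<bar>y - z\<bar>\<^sup>2 \<le> \<epsilon>\<^sup>2" by (intro power_mono) auto
    thus "indicator W y * (y - z)\<^sup>2 \<le> indicator W y * \<epsilon>\<^sup>2"
      by (auto simp: W_def abs_le_iff split: split_indicator)
  next
    show "integrable P (\<lambda>y. indicator W y * (y - z)\<^sup>2)"
      by (rule integrable_indicator_continuous) (auto intro!: continuous_intros)
    show "integrable P (\<lambda>y. indicator W y * \<epsilon>\<^sup>2)"
      by (rule integrable_indicator_continuous) auto
  qed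
  finally have "9 * \<epsilon>\<^sup>2 * M0 W \<le> \<epsilon>\<^sup>2 * M0 W" by (simp add: M0_def mult.commute)
  moreover have "M0 W = (3/2) ^ 1 * ((z + \<epsilon>) - (z - \<epsilon>))"
    unfolding W_def using \<epsilon> by (intro M_J_interval(1)) (auto simp: J0_def J1_def)
  ultimately show False using \<epsilon>(1) by (simp add: mult_le_cancel_right)
qed

lemma centroid_cell:
  assumes opt: "optimal_n_means n \<alpha>" and a: "a \<in> \<alpha>"
    and hin: "\<And>y. y \<in> Jsupp \<Longrightarrow> l \<le> y \<Longrightarrow> y \<le> r \<Longrightarrow> \<forall>c\<in>\<alpha>. (y - a)\<^sup>2 \<le> (y - c)\<^sup>2"
    and hout: "\<And>y. y \<in> Jsupp \<Longrightarrow> \<not> (l \<le> y \<and> y \<le> r) \<Longrightarrow> \<exists>c\<in>\<alpha> - {a}. (y - c)\<^sup>2 \<le> (y - a)\<^sup>2"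
  shows "M1 {l..r} = a * M0 {l..r}" "0 < M0 {l..r}"
proof -
  have fa: "finite \<alpha>" using opt unfolding optimal_n_means_def by auto
  have inR: "AE y in P. y \<in> {l..r} \<longrightarrow> dmin \<alpha> y = (y - a)\<^sup>2"
    using AE_in_Jsupp by eventually_elim (use hin dmin_eq_nearest[OF fa a] in auto)
  have out: "AE y in P. y \<notin> {l..r} \<longrightarrow> (\<exists>c\<in>\<alpha> - {a}. (y - c)\<^sup>2 \<le> dmin \<alpha> y)"
    using AE_in_Jsupp
  proof eventually_elim
    case (elim y)
    show ?case
    proof
      assume "y \<notin> {l..r}"
      then obtain c where "c \<in> \<alpha> - {a}" "(y - c)\<^sup>2 \<le> (y - a)\<^sup>2" using hout[OF elim] by auto
      thus "\<exists>c\<in>\<alpha> - {a}. (y - c)\<^sup>2 \<le> dmin \<alpha> y" using nearer_outside[OF fa, of c "{a}" y] by auto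
    qed
  qed
  show "M1 {l..r} = a * M0 {l..r}" by (rule centroid_condition[OF opt a _ inR out]) simp
  show "0 < M0 {l..r}" by (rule optimal_region_mass_pos[OF opt a _ out]) simp
qed

lemma centroid_boundaries:
  assumes "optimal_n_means n \<alpha>" "a \<in> \<alpha>" "left_boundary \<alpha> a l" "right_boundary \<alpha> a r"
  shows "M1 {l..r} = a * M0 {l..r}" "0 < M0 {l..r}"
  by (rule centroid_cell[OF assms(1,2)];
      use cell_nearest[OF assms(3,4)] outside_cell_nearer[OF assms(3,4)] Jsupp_unit in force)+

lemma optimal_point_unit:
  assumes opt: "optimal_n_means n \<alpha>" and a: "a \<in> \<alpha>"
  shows "0 \<le> a \<and> a \<le> 1"
proof -
  have "finite \<alpha>" using opt unfolding optimal_n_means_def by auto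
  then obtain l r where "left_boundary \<alpha> a l" "right_boundary \<alpha> a r"
    using left_boundary_exists right_boundary_exists by blast
  note cc = centroid_boundaries[OF opt a this]
  have "0 * M0 {l..r} \<le> M1 {l..r}" "M1 {l..r} \<le> 1 * M0 {l..r}"
    by (rule M1_bounds; use Jsupp_unit in force)+
  thus ?thesis using cc by (auto simp: mult_le_cancel_right zero_le_mult_iff)
qed

definition cost :: "real \<Rightarrow> real set \<Rightarrow> real" where
  "cost c E = M2 E - 2 * c * M1 E + c\<^sup>2 * M0 E"

lemma integral_eq_cost: "E \<in> sets borel \<Longrightarrow> (\<integral>y. indicator E y * (y - c)\<^sup>2 \<partial>P) = cost c E"
  unfolding cost_def by (rule M_square_expand)

lemma M_empty [simp]: "M0 {} = 0" "M1 {} = 0" "M2 {} = 0"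
  by (simp_all add: M0_def M1_def M2_def)

lemma cost_empty [simp]: "cost c {} = 0"
  by (simp add: cost_def)

lemma M_degenerate:
  assumes "v \<le> u"
  shows "M0 {u..v} = 0" "M1 {u..v} = 0" "M2 {u..v} = 0"
proof -
  have "M0 {u..v} = M0 {}" "M1 {u..v} = M1 {}" "M2 {u..v} = M2 {}"
    by (rule M_cong[where z = u]; use assms in auto)+
  thus "M0 {u..v} = 0" "M1 {u..v} = 0" "M2 {u..v} = 0" by simp_all
qed

lemma cost_degenerate: "v \<le> u \<Longrightarrow> cost c {u..v} = 0"
  by (simp add: cost_def M_degenerate)

lemma M_singleton [simp]: "M0 {u} = 0" "M1 {u} = 0" "M2 {u} = 0"
  using M_degenerate[of u u] by simp_all

lemma cost_singleton [simp]: "cost c {u} = 0"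
  by (simp add: cost_def)

text \<open>The gap between J j and J (j+1) carries no mass.\<close>

lemma M_split_gap:
  assumes "\<And>y. y \<in> Jsupp \<Longrightarrow> l \<le> y \<Longrightarrow> y \<le> r \<Longrightarrow> J0 j \<le> y"
  defines "A \<equiv> {max l (J0 j)..min r (J1 j)}" and "B \<equiv> {max l (J0 (Suc j))..r}"
  shows "M0 {l..r} = M0 A + M0 B" "M1 {l..r} = M1 A + M1 B" "M2 {l..r} = M2 A + M2 B"
    "cost c {l..r} = cost c A + cost c B"
proof -
  have disj: "A \<inter> B = {}" using J1_less_J0_Suc[of j] by (auto simp: A_def B_def)
  have eqv: "y \<in> {l..r} \<longleftrightarrow> y \<in> A \<union> B" if "y \<in> Jsupp" for y
    using assms(1)[OF that] Jsupp_gap[OF that, of j] J0_mono[of j "Suc j"] J1_less_J0_Suc[of j]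
    unfolding A_def B_def by force
  show "M0 {l..r} = M0 A + M0 B" "M1 {l..r} = M1 A + M1 B" "M2 {l..r} = M2 A + M2 B"
    by (rule M_split[where z = l]; use eqv disj in \<open>auto simp: A_def B_def\<close>)+
  thus "cost c {l..r} = cost c A + cost c B" by (simp add: cost_def algebra_simps)
qed

text \<open>Optimality compared with the set in which the points of U, whose cells cover [l, r], are
  replaced by v1 serving [l, \<theta>] and v2 serving [\<theta>, r].\<close>

lemma optimal_cell_replacement:
  assumes opt: "optimal_n_means n \<alpha>" and U: "U \<subseteq> \<alpha>" "card ({v1, v2} - (\<alpha> - U)) \<le> card U"
    and lmr: "l \<le> m" "m \<le> r"
    and cell_a: "\<And>y. l \<le> y \<Longrightarrow> y \<le> m \<Longrightarrow> dmin \<alpha> y = (y - a)\<^sup>2"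
    and cell_b: "\<And>y. m \<le> y \<Longrightarrow> y \<le> r \<Longrightarrow> dmin \<alpha> y = (y - b)\<^sup>2"
    and out: "\<And>y. y \<in> Jsupp \<Longrightarrow> \<not> (l \<le> y \<and> y \<le> r) \<Longrightarrow> \<exists>c\<in>\<alpha> - U. (y - c)\<^sup>2 \<le> dmin \<alpha> y"
  shows "cost a {l..m} + cost b {m..r} \<le> cost v1 {l..\<theta>} + cost v2 {\<theta>..r}"
proof -
  have fa: "finite \<alpha>" using opt unfolding optimal_n_means_def by auto
  have int: "integrable P (\<lambda>y. indicator E y * (y - c)\<^sup>2)" if "E \<in> sets borel" for E c
    by (rule integrable_indicator_continuous[OF that]) (intro continuous_intros)
  have "cost a {l..m} + cost b {m..r} = cost a {l..m} + cost b {m<..r}"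
    by (simp add: cost_def M_open_left)
  also have "\<dots> = (\<integral>y. indicator {l..r} y * dmin \<alpha> y \<partial>P)"
  proof -
    have "indicator {l..r} y * dmin \<alpha> y
        = indicator {l..m} y * (y - a)\<^sup>2 + indicator {m<..r} y * (y - b)\<^sup>2" for y
      using cell_a[of y] cell_b[of y] lmr by (cases "y \<le> m") (auto split: split_indicator)
    thus ?thesis using int[of "{l..m}" a] int[of "{m<..r}" b] by (simp add: integral_eq_cost)
  qed
  also have "\<dots> \<le> (\<integral>y. indicator {l..r} y * dmin {v1, v2} y \<partial>P)"
    by (rule optimal_local_replacement[OF opt _ _ U]) (use AE_in_Jsupp out in \<open>auto elim!: eventually_mono\<close>)
  also have "\<dots> \<le> (\<integral>y. indicator {l..\<theta>} y * (y - v1)\<^sup>2 + indicator {\<theta><..r} y * (y - v2)\<^sup>2 \<partial>P)"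
  proof (rule integral_mono)
    fix y
    show "indicator {l..r} y * dmin {v1, v2} y
        \<le> indicator {l..\<theta>} y * (y - v1)\<^sup>2 + indicator {\<theta><..r} y * (y - v2)\<^sup>2"
      using dmin_le[of "{v1, v2}" v1 y] dmin_le[of "{v1, v2}" v2 y] dmin_nonneg[of "{v1, v2}" y]
      by (cases "y \<le> \<theta>") (auto split: split_indicator)
  qed (use integrable_indicator_dmin int in auto)
  also have "\<dots> = cost v1 {l..\<theta>} + cost v2 {\<theta><..r}"
    using int[of "{l..\<theta>}" v1] int[of "{\<theta><..r}" v2] by (simp add: integral_eq_cost)
  also have "cost v2 {\<theta><..r} = cost v2 {\<theta>..r}"
    by (simp add: cost_def M_open_left)
  finally show ?thesis .
qed

text \<open>The configuration of a gap point s without a predecessor in J j, in terms of masses and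
  moments: J j has mass w and centroid x0 + L/2, the part of [x0 + 2L, 1] served by s has mass
  b \<le> w and first moment fB, and hyp states that serving both parts by their common centroid s is no
  worse than serving them by x0 + L/2 and by q. This fails because the centroids of the two parts
  are at least 3L/2 apart, while q lies within L of the second one.\<close>

lemma single_swap_absurd:
  fixes w L x0 b fB s q gA gB :: real
  assumes w: "0 < w" and L: "0 < L" and b: "0 < b" "b \<le> w"
    and fB: "(x0 + 2*L) * b \<le> fB" "fB \<le> (x0 + 3*L) * b"
    and q: "x0 + 2*L \<le> q" "q \<le> x0 + 3*L"
    and s: "s * (w + b) = w * (x0 + L/2) + fB"
    and hyp: "(gA + gB) - 2 * s * (w * (x0 + L/2) + fB) + s\<^sup>2 * (w + b)
       \<le> (gA - 2 * (x0 + L/2) * (w * (x0 + L/2)) + (x0 + L/2)\<^sup>2 * w) + (gB - 2 * q * fB + q\<^sup>2 * b)"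
  shows False
proof -
  define X where "X = fB - b * (x0 + L/2)"
  define Y where "Y = q * b - fB"
  define F where "F = w * (x0 + L/2) + fB"
  define Z where "Z = - 2 * s * F + s\<^sup>2 * (w + b) + w * (x0 + L/2)\<^sup>2 + 2 * q * fB - q\<^sup>2 * b"
  have "Z = ((gA + gB) - 2 * s * (w * (x0 + L/2) + fB) + s\<^sup>2 * (w + b))
       - ((gA - 2 * (x0 + L/2) * (w * (x0 + L/2)) + (x0 + L/2)\<^sup>2 * w) + (gB - 2 * q * fB + q\<^sup>2 * b))"
    unfolding Z_def F_def by (simp add: power2_eq_square field_simps)
  hence Zle: "Z \<le> 0" using hyp by linarith
  have sF: "s * (w + b) = F" using s unfolding F_def .
  have z1: "(w + b) * (- 2 * s * F + s\<^sup>2 * (w + b)) = - 2 * F * (s * (w + b)) + (s * (w + b))\<^sup>2"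
    by (simp add: power2_eq_square algebra_simps)
  have z2: "(w + b) * Z = - F\<^sup>2 + (w + b) * (w * (x0 + L/2)\<^sup>2 + 2 * q * fB - q\<^sup>2 * b)"
    using z1 unfolding sF Z_def by (simp add: power2_eq_square algebra_simps)
  have z3: "b * (- F\<^sup>2 + (w + b) * (w * (x0 + L/2)\<^sup>2 + 2 * q * fB - q\<^sup>2 * b)) = X\<^sup>2 * w - Y\<^sup>2 * (w + b)"
    unfolding F_def X_def Y_def by (simp add: power2_eq_square algebra_simps)
  have "b * ((w + b) * Z) \<le> 0" using Zle w b by (simp add: mult_nonneg_nonpos)
  hence neg: "X\<^sup>2 * w - Y\<^sup>2 * (w + b) \<le> 0" using z2 z3 by simp
  have X1: "3/2 * L * b \<le> X" unfolding X_def using fB by (simp add: algebra_simps)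
  have q1: "b * q \<le> b * (x0 + 3*L)" "b * (x0 + 2*L) \<le> b * q" using q b by (auto intro: mult_left_mono)
  have Y1: "\<bar>Y\<bar> \<le> L * b" unfolding Y_def using fB q1
    by (auto simp: abs_le_iff algebra_simps)
  have "(3/2 * L * b)\<^sup>2 \<le> X\<^sup>2" using X1 L b by (intro power_mono) auto
  moreover have "(3/2 * L * b)\<^sup>2 = 9/4 * (L\<^sup>2 * b\<^sup>2)" by (simp add: power2_eq_square)
  ultimately have X2: "9/4 * (L\<^sup>2 * b\<^sup>2) \<le> X\<^sup>2" by simp
  have Y2: "Y\<^sup>2 \<le> L\<^sup>2 * b\<^sup>2"
    using power_mono[OF Y1, of 2] by (simp add: power_mult_distrib)
  have "9/4 * (L\<^sup>2 * b\<^sup>2) * w \<le> X\<^sup>2 * w" using X2 w by (intro mult_right_mono) auto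
  moreover have "Y\<^sup>2 * (w + b) \<le> (L\<^sup>2 * b\<^sup>2) * (2 * w)" using Y2 b by (intro mult_mono) auto
  moreover have "0 < L\<^sup>2 * b\<^sup>2 * w" using L b w by simp
  ultimately show False using neg by linarith
qed

lemma swap_bracket_pos:
  fixes X E L :: real
  assumes "0 \<le> E" "E < X" "X < L" "2 * L < 3 * X - E"
  shows "(X - E) * (L - E) < (2 * X - E - L) * (3 * L - X)"
proof -
  define f where "f = (\<lambda>E. (2 * X - E - L) * (3 * L - X) - (X - E) * (L - E))"
  define E' where "E' = 3 * X - 2 * L"
  have "f E - f E' = (E' - E) * (2 * L - 2 * X + E' + E)"
    unfolding f_def by (simp add: algebra_simps power2_eq_square)
  moreover have "0 < (E' - E) * (2 * L - 2 * X + E' + E)"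
    using assms unfolding E'_def by (intro mult_pos_pos) auto
  moreover have "f E' = (L - X) * (5 * X - 3 * L)" unfolding f_def E'_def by (simp add: algebra_simps)
  moreover have "0 < (L - X) * (5 * X - 3 * L)" using assms by (intro mult_pos_pos) auto
  ultimately have "0 < f E" by linarith
  thus ?thesis unfolding f_def by simp
qed

text \<open>The configuration of a gap point s with predecessor t1 in J j: J j has density \<rho>, t1 serves
  [e, mid], s serves [mid, x0 + L] and a part of [x0 + 2L, 1] of mass b and first moment fB, and
  hyp states that this is no worse than serving [e, x0 + L] by its midpoint and the upper part by
  its centroid fB / b.\<close>

lemma double_swap_absurd:
  fixes \<rho> L x0 e mid b fB s t1 gD gA gB :: real
  assumes \<rho>: "0 < \<rho>" and L: "0 < L" and e: "x0 \<le> e" "e < mid" and mid: "mid < x0 + L"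
    and b: "0 < b" and fB: "(x0 + 2*L) * b \<le> fB"
    and t1: "t1 = (e + mid) / 2" and s: "s = 2 * mid - t1" and sg: "x0 + L < s"
    and cs: "s * (\<rho> * (x0 + L - mid) + b) = \<rho> * (((x0 + L)\<^sup>2 - mid\<^sup>2) / 2) + fB"
    and hyp: "(gD - 2 * t1 * (\<rho> * ((mid\<^sup>2 - e\<^sup>2) / 2)) + t1\<^sup>2 * (\<rho> * (mid - e)))
      + ((gA + gB) - 2 * s * (\<rho> * (((x0 + L)\<^sup>2 - mid\<^sup>2) / 2) + fB) + s\<^sup>2 * (\<rho> * (x0 + L - mid) + b))
      \<le> ((gD + gA) - 2 * ((e + x0 + L) / 2) * (\<rho> * ((mid\<^sup>2 - e\<^sup>2) / 2) + \<rho> * (((x0 + L)\<^sup>2 - mid\<^sup>2) / 2))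
           + ((e + x0 + L) / 2)\<^sup>2 * (\<rho> * (mid - e) + \<rho> * (x0 + L - mid)))
        + (gB - 2 * (fB / b) * fB + (fB / b)\<^sup>2 * b)"
  shows False
proof -
  define mD where "mD = \<rho> * (mid - e)"
  define fD where "fD = \<rho> * ((mid\<^sup>2 - e\<^sup>2) / 2)"
  define mA where "mA = \<rho> * (x0 + L - mid)"
  define \<mu> where "\<mu> = (x0 + L + mid) / 2"
  define fA where "fA = \<rho> * (((x0 + L)\<^sup>2 - mid\<^sup>2) / 2)"
  define c1 where "c1 = (e + x0 + L) / 2"
  define c2 where "c2 = fB / b"
  define F where "F = fA + fB"
  have fA_eq: "fA = mA * \<mu>" unfolding fA_def mA_def \<mu>_def by (simp add: power2_eq_square field_simps)
  have fD_eq: "fD = mD * t1" unfolding fD_def mD_def t1 by (simp add: power2_eq_square algebra_simps)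
  have mApos: "0 < mA" unfolding mA_def using \<rho> mid by simp
  have mDpos: "0 < mD" unfolding mD_def using \<rho> e by simp
  define ZD where "ZD = - 2 * t1 * fD + t1\<^sup>2 * mD + 2 * c1 * fD - c1\<^sup>2 * mD"
  define ZE where "ZE = - 2 * s * F + s\<^sup>2 * (mA + b) + 2 * c1 * fA - c1\<^sup>2 * mA + 2 * c2 * fB - c2\<^sup>2 * b"
  have "ZD + ZE \<le> 0"
  proof -
    have "ZD + ZE = ((gD - 2 * t1 * fD + t1\<^sup>2 * mD) + ((gA + gB) - 2 * s * F + s\<^sup>2 * (mA + b)))
      - (((gD + gA) - 2 * c1 * (fD + fA) + c1\<^sup>2 * (mD + mA)) + (gB - 2 * c2 * fB + c2\<^sup>2 * b))"
      unfolding ZD_def ZE_def by (simp add: algebra_simps)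
    thus ?thesis using hyp unfolding mD_def fD_def mA_def fA_def c1_def c2_def F_def by linarith
  qed
  have ZD_eq: "ZD = - mD * (c1 - t1)\<^sup>2" unfolding ZD_def fD_eq by (simp add: power2_eq_square algebra_simps)
  have sF: "s * (mA + b) = F" using cs unfolding mA_def fA_def F_def by simp
  have z1: "(mA + b) * (- 2 * s * F + s\<^sup>2 * (mA + b)) = - 2 * F * (s * (mA + b)) + (s * (mA + b))\<^sup>2"
    by (simp add: power2_eq_square algebra_simps)
  hence z1': "(mA + b) * (- 2 * s * F + s\<^sup>2 * (mA + b)) = - F\<^sup>2" unfolding sF by (simp add: power2_eq_square)
  have z2: "b * (2 * c2 * fB - c2\<^sup>2 * b) = fB\<^sup>2" unfolding c2_def using b by (simp add: power2_eq_square field_simps)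
  have z3: "b * (mA + b) * ZE = b * (mA + b) * (2 * c1 * fA - c1\<^sup>2 * mA) + b * ((mA + b) * (- 2 * s * F + s\<^sup>2 * (mA + b))) + (mA + b) * (b * (2 * c2 * fB - c2\<^sup>2 * b))"
    unfolding ZE_def by (simp add: algebra_simps)
  have z4: "b * (mA + b) * ZE = b * (mA + b) * (- mA * (c1 - \<mu>)\<^sup>2) + mA * (fB - b * \<mu>)\<^sup>2"
  proof -
    have "b * (mA + b) * ZE = b * (mA + b) * (2 * c1 * fA - c1\<^sup>2 * mA) + b * (- F\<^sup>2) + (mA + b) * fB\<^sup>2"
      using z3 z1' z2 by simp
    also have "\<dots> = b * (mA + b) * (- mA * (c1 - \<mu>)\<^sup>2) + mA * (fB - b * \<mu>)\<^sup>2"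
      unfolding F_def fA_eq by (simp add: power2_eq_square algebra_simps)
    finally show ?thesis .
  qed
  have cc2: "fB - b * \<mu> = (s - \<mu>) * (mA + b)"
  proof -
    have "(s - \<mu>) * (mA + b) = s * (mA + b) - \<mu> * (mA + b)" by (simp add: algebra_simps)
    also have "\<dots> = (mA * \<mu> + fB) - \<mu> * (mA + b)" using sF unfolding F_def fA_eq by simp
    also have "\<dots> = fB - b * \<mu>" by (simp add: algebra_simps)
    finally show ?thesis by simp
  qed
  have sm: "0 \<le> s - \<mu>" using sg mid unfolding \<mu>_def by simp
  have fbm: "b * (x0 + 2 * L - \<mu>) \<le> fB - b * \<mu>" using fB by (simp add: algebra_simps)
  have "mA * (s - \<mu>) * (mA + b) * (b * (x0 + 2 * L - \<mu>)) \<le> mA * (s - \<mu>) * (mA + b) * (fB - b * \<mu>)"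
    using fbm mApos sm b by (intro mult_left_mono) auto
  also have "\<dots> = mA * (fB - b * \<mu>)\<^sup>2" unfolding cc2 by (simp add: power2_eq_square algebra_simps)
  finally have z5: "b * (mA + b) * (mA * (s - \<mu>) * (x0 + 2 * L - \<mu>)) \<le> mA * (fB - b * \<mu>)\<^sup>2"
    by (simp add: algebra_simps)
  define Q where "Q = - mD * (c1 - t1)\<^sup>2 - mA * (c1 - \<mu>)\<^sup>2 + mA * (s - \<mu>) * (x0 + 2 * L - \<mu>)"
  have Qeq: "Q = \<rho> * (x0 + L - mid) / 4 * ((2 * (mid - x0) - (e - x0) - L) * (3 * L - (mid - x0)) - ((mid - x0) - (e - x0)) * (L - (e - x0)))"
    unfolding Q_def mD_def mA_def c1_def \<mu>_def t1 s by (simp add: power2_eq_square field_simps)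
  have "0 < Q"
  proof -
    have "((mid - x0) - (e - x0)) * (L - (e - x0)) < (2 * (mid - x0) - (e - x0) - L) * (3 * L - (mid - x0))"
      using e mid sg unfolding s t1 by (intro swap_bracket_pos) (auto simp: field_simps)
    thus ?thesis unfolding Qeq using \<rho> mid by (intro mult_pos_pos) auto
  qed
  have "b * (mA + b) * (ZD + ZE) \<ge> b * (mA + b) * Q"
    using z4 z5 unfolding Q_def ZD_eq by (simp add: algebra_simps)
  moreover have "0 < b * (mA + b) * Q" using b mApos \<open>0 < Q\<close> by simp
  moreover have "b * (mA + b) * (ZD + ZE) \<le> 0" using \<open>ZD + ZE \<le> 0\<close> b mApos by (simp add: mult_nonneg_nonpos)
  ultimately show False by linarith
qed

section \<open>The induction step\<close>

text \<open>At level j, the points of \<alpha> in [J0 j, 1] serve exactly the support above J0 j.\<close>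

definition separated :: "real set \<Rightarrow> nat \<Rightarrow> bool" where
  "separated \<alpha> j \<longleftrightarrow>
     (\<forall>x a. x \<in> Jsupp \<longrightarrow> J0 j < x \<longrightarrow> a \<in> \<alpha> \<longrightarrow> (a < J0 j \<or> 1 < a) \<longrightarrow>
        (\<exists>b\<in>\<alpha>. J0 j \<le> b \<and> b \<le> 1 \<and> \<bar>x - b\<bar> < \<bar>x - a\<bar>)) \<and>
     (\<forall>x a. x \<in> Jsupp \<longrightarrow> x < J0 j \<longrightarrow> a \<in> \<alpha> \<longrightarrow> J0 j \<le> a \<longrightarrow>
        (\<exists>b\<in>\<alpha>. b < J0 j \<and> \<bar>x - b\<bar> < \<bar>x - a\<bar>))"

definition split_at :: "real set \<Rightarrow> nat \<Rightarrow> bool" where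
  "split_at \<alpha> j \<longleftrightarrow> \<alpha> \<inter> {J1 j<..<J0 (Suc j)} = {} \<and>
   (\<exists>a0 b0. a0 \<in> \<alpha> \<and> a0 \<in> J j \<and> b0 \<in> \<alpha> \<and> J0 (Suc j) \<le> b0 \<and> b0 \<le> 1 \<and>
      (\<forall>c\<in>\<alpha>. c < J0 (Suc j) \<longrightarrow> c \<le> a0) \<and> (\<forall>c\<in>\<alpha>. J0 (Suc j) \<le> c \<longrightarrow> b0 \<le> c) \<and>
      2 * J1 j < a0 + b0 \<and> a0 + b0 < 2 * J0 (Suc j))"

context
  fixes n j :: nat and \<alpha> :: "real set"
  assumes opt: "optimal_n_means n \<alpha>" and j1: "1 \<le> j" and sep: "separated \<alpha> j"
    and two: "2 \<le> card (\<alpha> \<inter> {J0 j..1})"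
begin

lemma finite_alpha: "finite \<alpha>"
  using opt unfolding optimal_n_means_def by auto

lemma J_geometry_j: "J1 j = J0 j + Jlen j" "J0 (Suc j) = J0 j + 2 * Jlen j" "1 = J0 j + 3 * Jlen j"
  using J_geometry[OF j1] by auto

lemma nearer_in_tail:
  assumes "x \<in> Jsupp" "J0 j < x" "c \<in> \<alpha>" "c < J0 j \<or> 1 < c"
  obtains b where "b \<in> \<alpha>" "J0 j \<le> b" "b \<le> 1" "(x - b)\<^sup>2 < (x - c)\<^sup>2"
  using sep assms unfolding separated_def abs_less_iff_square_less by blast

lemma not_nearest_below:
  assumes "y \<in> Jsupp" "y < J0 j" "a \<in> \<alpha>" "J0 j \<le> a" "\<forall>c\<in>\<alpha>. (y - a)\<^sup>2 \<le> (y - c)\<^sup>2"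
  shows False
proof -
  obtain b where "b \<in> \<alpha>" "\<bar>y - b\<bar> < \<bar>y - a\<bar>"
    using sep assms(1-4) unfolding separated_def by blast
  thus False using assms(5) by (auto simp: abs_less_iff_square_less)
qed

lemma cell_above_J0:
  assumes "a \<in> \<alpha>" "J0 j \<le> a" "left_boundary \<alpha> a l" "right_boundary \<alpha> a r"
    and "y \<in> Jsupp" "l \<le> y" "y \<le> r"
  shows "J0 j \<le> y"
  using not_nearest_below[OF assms(5) _ assms(1,2)] cell_nearest[OF assms(3,4,6,7)] by force

text \<open>The cell of the smallest point of \<alpha> above J0 j reaches down to J0 j: otherwise support just
  above J0 j would be served from below.\<close>

lemma left_boundary_le_J0:
  assumes a: "a \<in> \<alpha>" "J0 j \<le> a" and amin: "\<forall>c\<in>\<alpha>. J0 j \<le> c \<longrightarrow> a \<le> c"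
    and l: "left_boundary \<alpha> a l"
  shows "l \<le> J0 j"
proof (rule ccontr)
  assume "\<not> l \<le> J0 j"
  define y where "y = (J0 j + min l (J0 j + Jlen j)) / 2"
  have y: "J0 j < y" "y < l" "y \<le> J0 j + Jlen j"
    unfolding y_def using \<open>\<not> l \<le> J0 j\<close> Jlen_pos[of j] by auto
  hence "y \<in> J j" using J_geometry_j unfolding J_def by auto
  hence yS: "y \<in> Jsupp" using j1 unfolding Jsupp_def by auto
  obtain c where c: "c \<in> \<alpha>" "c < a" "(y - c)\<^sup>2 < (y - a)\<^sup>2"
    using l y Jsupp_unit[OF yS] unfolding left_boundary_def by blast
  have "c < J0 j" using amin c by force
  then obtain b where b: "b \<in> \<alpha>" "J0 j \<le> b" "(y - b)\<^sup>2 < (y - c)\<^sup>2"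
    using nearer_in_tail[OF yS y(1) c(1)] by blast
  have "y \<le> a" "a \<le> b" using y l amin b unfolding left_boundary_def by auto
  hence "(y - a)\<^sup>2 \<le> (y - b)\<^sup>2" unfolding square_dist_le_iff by (intro mult_nonneg_nonpos) auto
  thus False using b(3) c(3) by simp
qed

lemma Jsupp_tail_cases: "y \<in> Jsupp \<Longrightarrow> J0 j \<le> y \<Longrightarrow> y \<le> J0 j + Jlen j \<or> J0 j + 2 * Jlen j \<le> y"
  using Jsupp_gap[of y j] J_geometry_j by force

lemma M_lower_block_interval:
  assumes "J0 j \<le> u" "u \<le> v" "v \<le> J0 j + Jlen j"
  shows "M0 {u..v} = (3/2)^j * (v - u)" "M1 {u..v} = (3/2)^j * ((v\<^sup>2 - u\<^sup>2) / 2)"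
  using M_J_interval[OF j1, of u v] assms J_geometry_j by auto

lemma M_lower_block:
  "M0 {J0 j..J0 j + Jlen j} = (1/2)^j" "M1 {J0 j..J0 j + Jlen j} = (1/2)^j * (J0 j + Jlen j / 2)"
proof -
  have "(3/2::real) ^ j * (((J0 j + Jlen j)\<^sup>2 - (J0 j)\<^sup>2) / 2) = (3/2) ^ j * Jlen j * (J0 j + Jlen j / 2)"
    by (simp add: power2_eq_square field_simps)
  thus "M0 {J0 j..J0 j + Jlen j} = (1/2)^j" "M1 {J0 j..J0 j + Jlen j} = (1/2)^j * (J0 j + Jlen j / 2)"
    using M_lower_block_interval[of "J0 j" "J0 j + Jlen j"] Jlen_pos[of j] J_geometry(4)[OF j1] by auto
qed

lemma M0_upper_block_le:
  assumes "E \<in> sets borel" "E \<subseteq> {J0 j + 2 * Jlen j..}"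
  shows "M0 E \<le> (1/2)^j"
proof -
  have "M0 E \<le> M0 {J0 j + 2 * Jlen j..1}"
    by (rule M0_mono) (use assms Jsupp_unit in force)+
  thus ?thesis using M0_tail[of "Suc j"] J_geometry_j by simp
qed

lemma other_tail_point:
  assumes "s \<in> \<alpha>"
  obtains c where "c \<in> \<alpha>" "J0 j \<le> c" "c \<le> 1" "c \<noteq> s"
proof -
  have "\<not> \<alpha> \<inter> {J0 j..1} \<subseteq> {s}"
    using two card_mono[of "{s}" "\<alpha> \<inter> {J0 j..1}"] by auto
  then obtain c where "c \<in> \<alpha> \<inter> {J0 j..1}" "c \<noteq> s" by blast
  thus ?thesis using that by auto
qed

lemma dmin_cell:
  assumes "a \<in> \<alpha>" "left_boundary \<alpha> a l" "right_boundary \<alpha> a r" "l \<le> y" "y \<le> r"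
  shows "dmin \<alpha> y = (y - a)\<^sup>2"
  using dmin_eq_nearest[OF finite_alpha assms(1)] cell_nearest[OF assms(2-5)] by auto

lemma outside_cell:
  assumes "a \<in> \<alpha>" "left_boundary \<alpha> a l" "right_boundary \<alpha> a r"
    and "y \<in> Jsupp" "\<not> (l \<le> y \<and> y \<le> r)"
  shows "\<exists>c\<in>\<alpha> - {a}. (y - c)\<^sup>2 \<le> dmin \<alpha> y"
proof -
  obtain c where "c \<in> \<alpha> - {a}" "(y - c)\<^sup>2 \<le> (y - a)\<^sup>2"
    using outside_cell_nearer[OF assms(2,3) _ _ assms(5)] Jsupp_unit[OF assms(4)] by force
  thus ?thesis using nearer_outside[OF finite_alpha] by auto
qed

lemma centroid_above_gap:
  assumes a: "a \<in> \<alpha>" and lr: "left_boundary \<alpha> a l" "right_boundary \<alpha> a r"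
    and l: "J0 j + Jlen j \<le> l"
  shows "J0 j + 2 * Jlen j \<le> a"
proof -
  have "(J0 j + 2 * Jlen j) * M0 {l..r} \<le> M1 {l..r}"
    by (rule M1_bounds_except(1)[where z = "J0 j + Jlen j" and v = 1])
      (use l Jsupp_tail_cases Jsupp_unit Jlen_pos[of j] in force)+
  thus ?thesis using centroid_boundaries[OF opt a lr] by (simp add: mult_le_cancel_right)
qed

lemma outside_adjacent_cells:
  assumes p: "p \<in> \<alpha>" "left_boundary \<alpha> p l" and s: "s \<in> \<alpha>" "right_boundary \<alpha> s r" "p < s"
    and y: "y \<in> Jsupp" "\<not> (l \<le> y \<and> y \<le> r)"
  shows "\<exists>c\<in>\<alpha> - {p, s}. (y - c)\<^sup>2 \<le> dmin \<alpha> y"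
proof -
  have y01: "0 \<le> y" "y \<le> 1" using Jsupp_unit[OF y(1)] by auto
  have lp: "l \<le> p" and sr: "s \<le> r" using p s unfolding left_boundary_def right_boundary_def by auto
  show ?thesis
  proof (cases "y < l")
    case True
    then obtain c where c: "c \<in> \<alpha>" "c < p" "(y - c)\<^sup>2 < (y - p)\<^sup>2"
      using p(2) y01 unfolding left_boundary_def by blast
    have "(y - p)\<^sup>2 \<le> (y - s)\<^sup>2" using True lp s by (intro closer_right) auto
    thus ?thesis using nearer_outside[OF finite_alpha, of c "{p, s}" y] c p s(3) by auto
  next
    case False
    hence "r < y" using y by auto
    then obtain c where c: "c \<in> \<alpha>" "s < c" "(y - c)\<^sup>2 < (y - s)\<^sup>2"
      using s(2) y01 unfolding right_boundary_def by blast
    have "(y - s)\<^sup>2 \<le> (y - p)\<^sup>2" using \<open>r < y\<close> sr s by (intro closer_left) auto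
    thus ?thesis using nearer_outside[OF finite_alpha, of c "{p, s}" y] c s(1,3) by auto
  qed
qed

lemma cell_inside_J:
  assumes a: "a \<in> \<alpha>" "J0 j \<le> a" and lr: "left_boundary \<alpha> a l" "right_boundary \<alpha> a m"
    and m: "m < J0 j + Jlen j" and e: "e = max l (J0 j)"
  shows "e < m" "a = (e + m) / 2" "cost c {l..m} = cost c {e..m}"
proof -
  let ?\<rho> = "((3::real)/2)^j"
  have M: "M0 {l..m} = M0 {e..m}" "M1 {l..m} = M1 {e..m}" "cost c {l..m} = cost c {e..m}"
    using M_split_gap[of l m j] cell_above_J0[OF a lr] m Jlen_pos[of j] J_geometry_j
    unfolding e by (auto simp: max_def min_def M_degenerate cost_degenerate)
  note cc = centroid_boundaries[OF opt a(1) lr]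
  show em: "e < m" using cc M M0_degenerate[of m e] by (cases "e < m") auto
  have "M0 {e..m} = ?\<rho> * (m - e)" "M1 {e..m} = ?\<rho> * ((m\<^sup>2 - e\<^sup>2) / 2)"
    using M_lower_block_interval[of e m] em m e by auto
  hence "?\<rho> * ((m\<^sup>2 - e\<^sup>2) / 2) = a * (?\<rho> * (m - e))" using cc M by simp
  hence "?\<rho> * (m - e) * ((e + m) / 2) = ?\<rho> * (m - e) * a"
    by (simp add: power2_eq_square field_simps)
  thus "a = (e + m) / 2" using em by simp
  show "cost c {l..m} = cost c {e..m}" by (rule M(3))
qed

text \<open>A point s in the gap with no point of \<alpha> in [J0 j, s): its cell covers J j and a part of
  [J0 (j+1), 1], and moving s to the midpoint of J j would lower the error.\<close>

lemma gap_point_without_tail_predecessor: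
  assumes s: "s \<in> \<alpha>" "J0 j + Jlen j < s" "s < J0 j + 2 * Jlen j"
    and smin: "\<forall>c\<in>\<alpha>. J0 j \<le> c \<longrightarrow> s \<le> c"
  shows False
proof -
  let ?o = "J0 j" and ?L = "Jlen j" and ?w = "((1::real)/2)^j"
  let ?c1 = "?o + ?L / 2" and ?\<theta> = "?o + 3/2 * ?L"
  note L = Jlen_pos[of j] and g = J_geometry_j
  obtain l where l: "left_boundary \<alpha> s l" using left_boundary_exists[OF finite_alpha] by blast
  have lo: "l \<le> ?o" using left_boundary_le_J0[OF s(1) _ smin l] s L by simp
  have ls: "l \<le> s" using l unfolding left_boundary_def by simp
  obtain c where c: "c \<in> \<alpha>" "?o \<le> c" "c \<le> 1" "c \<noteq> s" using other_tail_point[OF s(1)] by blast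
  have "s < c" using smin c by force
  then obtain q where q: "q \<in> \<alpha>" "s < q" "\<forall>c\<in>\<alpha>. s < c \<longrightarrow> q \<le> c"
    using finite_successor_cases[OF finite_alpha, of s] c by force
  have q1: "q \<le> 1" using q c \<open>s < c\<close> by force
  define r where "r = (s + q) / 2"
  have r: "right_boundary \<alpha> s r" unfolding r_def using q s(1) by (intro right_boundary_midpoint) auto
  have sr: "s < r" unfolding r_def using q by simp
  have qB: "?o + 2 * ?L \<le> q"
  proof -
    have lq: "left_boundary \<alpha> q r"
      unfolding r_def using left_boundary_midpoint[OF s(1) q(2)] q by force
    obtain r2 where "right_boundary \<alpha> q r2" using right_boundary_exists[OF finite_alpha] by blast
    thus ?thesis using centroid_above_gap[OF q(1) lq] sr s by simp
  qed
  define EB where "EB = {?o + 2 * ?L..r}"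
  have above: "?o \<le> y" if "y \<in> Jsupp" "l \<le> y" "y \<le> max r ?\<theta>" for y
  proof (cases "y \<le> r")
    case True thus ?thesis using cell_above_J0[OF s(1) _ l r that(1,2)] s L by simp
  next
    case False thus ?thesis using that sr s by auto
  qed
  have split_lr: "M0 {l..r} = M0 {?o..?o + ?L} + M0 EB" "M1 {l..r} = M1 {?o..?o + ?L} + M1 EB"
    "cost s {l..r} = cost s {?o..?o + ?L} + cost s EB"
    using M_split_gap[of l r j] above lo sr s g L by (auto simp: EB_def max_def min_def)
  have EBb: "(?o + 2 * ?L) * M0 EB \<le> M1 EB" "M1 EB \<le> (?o + 3 * ?L) * M0 EB"
    by (rule M1_bounds; use Jsupp_unit g in \<open>force simp: EB_def\<close>)+
  have cs: "s * (?w + M0 EB) = ?w * ?c1 + M1 EB"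
    using centroid_boundaries[OF opt s(1) l r] split_lr M_lower_block by (simp add: algebra_simps)
  have bpos: "0 < M0 EB"
  proof (rule ccontr)
    assume "\<not> 0 < M0 EB"
    hence "M0 EB = 0" "M1 EB = 0" using M0_nonneg[of EB] EBb by (auto intro: order_antisym)
    thus False using cs s L by simp
  qed
  have "cost s {l..r} + cost s {r..r} \<le> cost ?c1 {l..?\<theta>} + cost q {?\<theta>..r}"
  proof (rule optimal_cell_replacement[OF opt, where U = "{s}"])
    show "card ({?c1, q} - (\<alpha> - {s})) \<le> card {s}"
      using q s card_mono[of "{?c1}" "{?c1, q} - (\<alpha> - {s})"] by auto
  qed (use s(1) ls sr dmin_cell[OF s(1) l r] outside_cell[OF s(1) l r] in auto)
  moreover have "cost ?c1 {l..?\<theta>} = cost ?c1 {?o..?o + ?L}"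
    using M_split_gap(4)[of l ?\<theta> j ?c1] above lo L g by (simp add: max_def min_def cost_degenerate)
  moreover have "cost q {?\<theta>..r} = cost q EB"
    using M_split_gap(4)[of ?\<theta> r j q] L g by (simp add: EB_def max_def min_def cost_degenerate)
  ultimately have "cost s {?o..?o + ?L} + cost s EB \<le> cost ?c1 {?o..?o + ?L} + cost q EB"
    using split_lr by (simp add: cost_degenerate)
  hence "(M2 {?o..?o + ?L} + M2 EB) - 2 * s * (?w * ?c1 + M1 EB) + s\<^sup>2 * (?w + M0 EB)
      \<le> (M2 {?o..?o + ?L} - 2 * ?c1 * (?w * ?c1) + ?c1\<^sup>2 * ?w) + (M2 EB - 2 * q * M1 EB + q\<^sup>2 * M0 EB)"
    by (simp add: cost_def M_lower_block algebra_simps)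
  moreover have "M0 EB \<le> ?w" using M0_upper_block_le[of EB] by (auto simp: EB_def)
  moreover have "q \<le> ?o + 3 * ?L" using q1 g by simp
  ultimately show False
    using single_swap_absurd[OF _ L bpos _ EBb qB _ cs] by simp
qed

text \<open>A point s in the gap whose left neighbour p lies in [J0 j, s): replacing p and s by the
  midpoint of the part of J j they serve and by the centroid of the part of [J0 (j+1), 1] served
  by s would lower the error.\<close>

lemma gap_point_with_tail_predecessor:
  assumes p: "p \<in> \<alpha>" "J0 j \<le> p" "p < s" and ppred: "\<forall>c\<in>\<alpha>. c < s \<longrightarrow> c \<le> p"
    and s: "s \<in> \<alpha>" "J0 j + Jlen j < s" "s < J0 j + 2 * Jlen j"
    and smin: "\<forall>c\<in>\<alpha>. J0 j + Jlen j < c \<longrightarrow> c < J0 j + 2 * Jlen j \<longrightarrow> s \<le> c"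
  shows False
proof -
  let ?o = "J0 j" and ?L = "Jlen j" and ?\<rho> = "((3::real)/2)^j" and ?\<theta> = "J0 j + 3/2 * Jlen j"
  note L = Jlen_pos[of j] and g = J_geometry_j
  define mid where "mid = (p + s) / 2"
  have pm: "p < mid" "mid < s" unfolding mid_def using p by auto
  have ls: "left_boundary \<alpha> s mid" unfolding mid_def by (rule left_boundary_midpoint[OF p(1) p(3) ppred])
  have rp: "right_boundary \<alpha> p mid" unfolding mid_def
    by (rule right_boundary_midpoint[OF s(1) p(3)]) (use ppred in force)
  obtain l1 where lp: "left_boundary \<alpha> p l1" using left_boundary_exists[OF finite_alpha] by blast
  obtain r where rs: "right_boundary \<alpha> s r" using right_boundary_exists[OF finite_alpha] by blast
  have l1p: "l1 \<le> p" and sr: "s \<le> r" using lp rs unfolding left_boundary_def right_boundary_def by auto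
  note ccs = centroid_boundaries[OF opt s(1) ls rs]
  have mid_lt: "mid < ?o + ?L" using centroid_above_gap[OF s(1) ls rs] s by force
  define e where "e = max l1 ?o"
  define EA where "EA = {mid..?o + ?L}"
  define EB where "EB = {?o + 2 * ?L..r}"
  have abovep: "?o \<le> y" if "y \<in> Jsupp" "l1 \<le> y" "y \<le> max mid ?\<theta>" for y
  proof (cases "y \<le> mid")
    case True thus ?thesis using cell_above_J0[OF p(1,2) lp rp that(1,2)] by simp
  next
    case False thus ?thesis using that p pm by auto
  qed
  have cell_s: "M0 {mid..r} = M0 EA + M0 EB" "M1 {mid..r} = M1 EA + M1 EB"
    "cost s {mid..r} = cost s EA + cost s EB"
    using M_split_gap[of mid r j] p pm mid_lt sr s L g by (auto simp: EA_def EB_def max_def min_def)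
  have em: "e < mid" and p_eq: "p = (e + mid) / 2" and cost_p: "cost p {l1..mid} = cost p {e..mid}"
    using cell_inside_J[OF p(1,2) lp rp mid_lt e_def] by auto
  have MD: "M0 {e..mid} = ?\<rho> * (mid - e)" "M1 {e..mid} = ?\<rho> * ((mid\<^sup>2 - e\<^sup>2) / 2)"
    using M_lower_block_interval[of e mid] em mid_lt by (auto simp: e_def)
  have MA: "M0 EA = ?\<rho> * (?o + ?L - mid)" "M1 EA = ?\<rho> * (((?o + ?L)\<^sup>2 - mid\<^sup>2) / 2)"
    unfolding EA_def using M_lower_block_interval[of mid "?o + ?L"] em mid_lt by (auto simp: e_def)
  have EBb: "(?o + 2 * ?L) * M0 EB \<le> M1 EB" "M1 EB \<le> 1 * M0 EB"
    by (rule M1_bounds; use Jsupp_unit g in \<open>force simp: EB_def\<close>)+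
  have cs: "s * (?\<rho> * (?o + ?L - mid) + M0 EB) = ?\<rho> * (((?o + ?L)\<^sup>2 - mid\<^sup>2) / 2) + M1 EB"
    using ccs cell_s MA by simp
  have bpos: "0 < M0 EB"
  proof (rule ccontr)
    assume "\<not> 0 < M0 EB"
    hence "M0 EB = 0" "M1 EB = 0" using M0_nonneg[of EB] EBb by (auto intro: order_antisym)
    hence "?\<rho> * (?o + ?L - mid) * s = ?\<rho> * (?o + ?L - mid) * ((?o + ?L + mid) / 2)"
      using cs by (simp add: power2_eq_square field_simps)
    thus False using s mid_lt by simp
  qed
  define c1 where "c1 = (e + ?o + ?L) / 2"
  define c2 where "c2 = M1 EB / M0 EB"
  have "cost p {l1..mid} + cost s {mid..r} \<le> cost c1 {l1..?\<theta>} + cost c2 {?\<theta>..r}"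
  proof (rule optimal_cell_replacement[OF opt, where U = "{p, s}"])
    have "card ({c1, c2} - (\<alpha> - {p, s})) \<le> card {c1, c2}" by (rule card_mono) auto
    also have "\<dots> \<le> card {p, s}" using p by (simp add: card_insert_if)
    finally show "card ({c1, c2} - (\<alpha> - {p, s})) \<le> card {p, s}" .
  qed (use p s l1p pm sr dmin_cell[OF p(1) lp rp] dmin_cell[OF s(1) ls rs]
      outside_adjacent_cells[OF p(1) lp s(1) rs p(3)] in auto)
  moreover have "cost c1 {l1..?\<theta>} = cost c1 {e..?o + ?L}"
    using M_split_gap(4)[of l1 ?\<theta> j c1] abovep L g
    by (simp add: e_def max_def min_def cost_degenerate)
  moreover have "cost c2 {?\<theta>..r} = cost c2 EB"
    using M_split_gap(4)[of ?\<theta> r j c2] L g by (simp add: EB_def max_def min_def cost_degenerate)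
  moreover have "M0 {e..?o + ?L} = M0 {e..mid} + M0 EA" "M1 {e..?o + ?L} = M1 {e..mid} + M1 EA"
    "M2 {e..?o + ?L} = M2 {e..mid} + M2 EA"
    unfolding EA_def using M_interval_split[of e mid "?o + ?L"] em mid_lt by auto
  ultimately have ineq: "cost p {e..mid} + (cost s EA + cost s EB) \<le> cost c1 {e..?o + ?L} + cost c2 EB"
    using cost_p cell_s by simp
  have "cost p {e..mid} + (cost s EA + cost s EB)
      = (M2 {e..mid} - 2 * p * (?\<rho> * ((mid\<^sup>2 - e\<^sup>2) / 2)) + p\<^sup>2 * (?\<rho> * (mid - e)))
        + ((M2 EA + M2 EB) - 2 * s * (?\<rho> * (((?o + ?L)\<^sup>2 - mid\<^sup>2) / 2) + M1 EB)
          + s\<^sup>2 * (?\<rho> * (?o + ?L - mid) + M0 EB))"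
    by (simp add: cost_def MD MA algebra_simps)
  moreover have "cost c1 {e..?o + ?L} + cost c2 EB
      = ((M2 {e..mid} + M2 EA) - 2 * ((e + ?o + ?L) / 2) * (?\<rho> * ((mid\<^sup>2 - e\<^sup>2) / 2) + ?\<rho> * (((?o + ?L)\<^sup>2 - mid\<^sup>2) / 2))
          + ((e + ?o + ?L) / 2)\<^sup>2 * (?\<rho> * (mid - e) + ?\<rho> * (?o + ?L - mid)))
        + (M2 EB - 2 * (M1 EB / M0 EB) * M1 EB + (M1 EB / M0 EB)\<^sup>2 * M0 EB)"
    using M_interval_split[of e mid "?o + ?L", folded EA_def] em mid_lt
    by (simp add: cost_def MD MA c1_def c2_def)
  moreover have "?o \<le> e" "s = 2 * mid - p" by (auto simp: e_def mid_def field_simps)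
  ultimately show False
    using double_swap_absurd[OF _ L _ em mid_lt bpos EBb(1) p_eq _ s(2) cs] ineq by simp
qed

lemma least_tail_point:
  obtains a where "a \<in> \<alpha>" "J0 j \<le> a" "a \<le> 1" "\<forall>c\<in>\<alpha>. J0 j \<le> c \<longrightarrow> a \<le> c"
proof -
  define T where "T = \<alpha> \<inter> {J0 j..1}"
  have T: "finite T" "T \<noteq> {}" using finite_alpha two unfolding T_def by auto
  hence "Min T \<in> T" by (rule Min_in)
  moreover have "Min T \<le> c" if "c \<in> \<alpha>" "J0 j \<le> c" for c
    using T that \<open>Min T \<in> T\<close> by (cases "c \<le> 1") (auto simp: T_def)
  ultimately show ?thesis using that by (auto simp: T_def)
qed

lemma greatest_tail_point:
  obtains b where "b \<in> \<alpha>" "J0 j \<le> b" "b \<le> 1" "\<forall>c\<in>\<alpha>. J0 j \<le> c \<longrightarrow> c \<le> 1 \<longrightarrow> c \<le> b"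
proof -
  define T where "T = \<alpha> \<inter> {J0 j..1}"
  have T: "finite T" "T \<noteq> {}" using finite_alpha two unfolding T_def by auto
  hence "Max T \<in> T" by (rule Max_in)
  moreover have "c \<le> Max T" if "c \<in> \<alpha>" "J0 j \<le> c" "c \<le> 1" for c
    using T(1) that by (auto simp: T_def intro: Max_ge)
  ultimately show ?thesis using that by (auto simp: T_def)
qed

lemma no_point_in_gap: "\<alpha> \<inter> {J1 j<..<J0 (Suc j)} = {}"
proof (rule ccontr)
  let ?o = "J0 j" and ?L = "Jlen j"
  define G where "G = \<alpha> \<inter> {J1 j<..<J0 (Suc j)}"
  assume "\<alpha> \<inter> {J1 j<..<J0 (Suc j)} \<noteq> {}"
  hence G: "finite G" "G \<noteq> {}" using finite_alpha unfolding G_def by auto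
  define s where "s = Min G"
  have "s \<in> G" unfolding s_def using G by (rule Min_in)
  hence s: "s \<in> \<alpha>" "?o + ?L < s" "s < ?o + 2 * ?L" unfolding G_def J_geometry_j by auto
  have smin: "\<forall>c\<in>\<alpha>. ?o + ?L < c \<longrightarrow> c < ?o + 2 * ?L \<longrightarrow> s \<le> c"
    unfolding s_def using G(1) by (auto simp: G_def J_geometry_j)
  from finite_predecessor_cases[OF finite_alpha, of s] show False
  proof
    assume "\<forall>c\<in>\<alpha>. s \<le> c"
    thus False by (intro gap_point_without_tail_predecessor[OF s]) auto
  next
    assume "\<exists>p\<in>\<alpha>. p < s \<and> (\<forall>c\<in>\<alpha>. c < s \<longrightarrow> c \<le> p)"
    then obtain p where p: "p \<in> \<alpha>" "p < s" "\<forall>c\<in>\<alpha>. c < s \<longrightarrow> c \<le> p" by blast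
    show False
    proof (cases "?o \<le> p")
      case True
      thus False by (intro gap_point_with_tail_predecessor[OF p(1) True p(2) p(3) s smin])
    next
      case False
      hence "\<forall>c\<in>\<alpha>. ?o \<le> c \<longrightarrow> s \<le> c" using p by force
      thus False by (intro gap_point_without_tail_predecessor[OF s])
    qed
  qed
qed

text \<open>If J j contained no point, the least point of \<alpha> above J0 j would lie in [J0 (j+1), 1]
  and still serve all of J j, whose mass is at least that of the rest of its cell: its cell would
  then have its centroid below J0 (j+1).\<close>

lemma exists_point_in_J: "\<exists>a\<in>\<alpha>. J0 j \<le> a \<and> a \<le> J0 j + Jlen j"
proof (rule ccontr)
  let ?o = "J0 j" and ?L = "Jlen j" and ?w = "((1::real)/2)^j"
  note L = Jlen_pos[of j] and g = J_geometry_j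
  assume nA: "\<not> (\<exists>a\<in>\<alpha>. ?o \<le> a \<and> a \<le> ?o + ?L)"
  obtain a where a: "a \<in> \<alpha>" "?o \<le> a" "a \<le> 1" and amin: "\<forall>c\<in>\<alpha>. ?o \<le> c \<longrightarrow> a \<le> c"
    by (rule least_tail_point)
  have aB: "?o + 2 * ?L \<le> a"
    using nA a no_point_in_gap g by (force simp: not_le)
  obtain l r where l: "left_boundary \<alpha> a l" and r: "right_boundary \<alpha> a r"
    using left_boundary_exists[OF finite_alpha] right_boundary_exists[OF finite_alpha] by blast
  have lo: "l \<le> ?o" by (rule left_boundary_le_J0[OF a(1,2) amin l])
  have ar: "a \<le> r" using r unfolding right_boundary_def by simp
  define EB where "EB = {?o + 2 * ?L..r}"
  have M: "M0 {l..r} = ?w + M0 EB" "M1 {l..r} = ?w * (?o + ?L / 2) + M1 EB"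
    using M_split_gap[of l r j] cell_above_J0[OF a(1,2) l r] lo aB ar L g M_lower_block
    by (auto simp: EB_def max_def min_def)
  have EBb: "M1 EB \<le> (?o + 3 * ?L) * M0 EB"
    by (rule M1_bounds(2)[where u = 0]) (use Jsupp_unit g in \<open>force simp: EB_def\<close>)+
  have "(?o + 2 * ?L) * (?w + M0 EB) \<le> a * (?w + M0 EB)"
    using aB M0_nonneg[of EB] by (intro mult_right_mono) auto
  also have "\<dots> = ?w * (?o + ?L / 2) + M1 EB"
    using centroid_boundaries(1)[OF opt a(1) l r] M by simp
  moreover have "?L * M0 EB \<le> ?L * ?w"
    using M0_upper_block_le[of EB] L by (intro mult_left_mono) (auto simp: EB_def)
  moreover have "(?o + 2 * ?L) * (?w + M0 EB) = ?o * ?w + 2 * (?L * ?w) + ?o * M0 EB + 2 * (?L * M0 EB)"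
    "?w * (?o + ?L / 2) = ?o * ?w + ?L * ?w / 2" "(?o + 3 * ?L) * M0 EB = ?o * M0 EB + 3 * (?L * M0 EB)"
    by (simp_all add: algebra_simps)
  moreover have "0 < ?L * ?w" using L by simp
  ultimately show False using EBb by linarith
qed

lemma greatest_tail_point_nearest:
  assumes b: "b \<in> \<alpha>" "J0 j \<le> b" "b \<le> 1" and bmax: "\<forall>c\<in>\<alpha>. J0 j \<le> c \<longrightarrow> c \<le> 1 \<longrightarrow> c \<le> b"
    and l: "left_boundary \<alpha> b l" and y: "y \<in> Jsupp" "l \<le> y" and c: "c \<in> \<alpha>"
  shows "(y - b)\<^sup>2 \<le> (y - c)\<^sup>2"
proof (cases "c \<le> b")
  case True
  thus ?thesis using l y c unfolding left_boundary_def by (cases "c = b") auto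
next
  case False
  hence "1 < c" using bmax c b by force
  show ?thesis
  proof (cases "y \<le> b")
    case True thus ?thesis using \<open>\<not> c \<le> b\<close> by (intro closer_right) auto
  next
    case False
    then obtain b' where b': "b' \<in> \<alpha>" "J0 j \<le> b'" "b' \<le> 1" "(y - b')\<^sup>2 < (y - c)\<^sup>2"
      using nearer_in_tail[OF y(1) _ c] \<open>1 < c\<close> b by force
    have "b' \<le> b" using bmax b' by auto
    hence "(y - b)\<^sup>2 \<le> (y - b')\<^sup>2"
      using False unfolding square_dist_le_iff by (intro mult_nonpos_nonneg) auto
    thus ?thesis using b'(4) by simp
  qed
qed

text \<open>If [J0 (j+1), 1] contained no point, the greatest point of \<alpha> in [J0 j, 1] would lie in
  J j and serve all of [J0 (j+1), 1], pulling the centroid of its cell above J1 j.\<close>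

lemma exists_point_in_upper_tail: "\<exists>b\<in>\<alpha>. J0 j + 2 * Jlen j \<le> b \<and> b \<le> 1"
proof (rule ccontr)
  let ?o = "J0 j" and ?L = "Jlen j" and ?w = "((1::real)/2)^j" and ?r = "((3::real)/2)^j"
  note L = Jlen_pos[of j] and g = J_geometry_j
  assume nB: "\<not> (\<exists>b\<in>\<alpha>. ?o + 2 * ?L \<le> b \<and> b \<le> 1)"
  obtain b where b: "b \<in> \<alpha>" "?o \<le> b" "b \<le> 1" and bmax: "\<forall>c\<in>\<alpha>. ?o \<le> c \<longrightarrow> c \<le> 1 \<longrightarrow> c \<le> b"
    by (rule greatest_tail_point)
  have bA: "b \<le> ?o + ?L"
    using nB b no_point_in_gap g by (force simp: not_le)
  obtain l where l: "left_boundary \<alpha> b l" using left_boundary_exists[OF finite_alpha] by blast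
  have lb: "l \<le> b" using l unfolding left_boundary_def by simp
  note nearest = greatest_tail_point_nearest[OF b bmax l]
  have cc: "M1 {l..1} = b * M0 {l..1}"
  proof (rule centroid_cell(1)[OF opt b(1)])
    fix y assume y: "y \<in> Jsupp" "\<not> (l \<le> y \<and> y \<le> 1)"
    hence "y < l" using Jsupp_unit[OF y(1)] by auto
    then obtain c where "c \<in> \<alpha>" "c < b" "(y - c)\<^sup>2 < (y - b)\<^sup>2"
      using l Jsupp_unit[OF y(1)] unfolding left_boundary_def by blast
    thus "\<exists>c\<in>\<alpha> - {b}. (y - c)\<^sup>2 \<le> (y - b)\<^sup>2" by (intro bexI[of _ c]) auto
  qed (use nearest in auto)
  define e where "e = max l ?o"
  have e: "?o \<le> e" "e \<le> ?o + ?L" unfolding e_def using lb bA L by auto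
  have M: "M0 {l..1} = ?r * (?o + ?L - e) + ?w" "M1 {l..1} = ?r * (((?o + ?L)\<^sup>2 - e\<^sup>2) / 2) + M1 {?o + 2 * ?L..1}"
  proof -
    have "?o \<le> y" if "y \<in> Jsupp" "l \<le> y" for y
      using not_nearest_below[OF that(1) _ b(1,2)] nearest[OF that] by force
    hence "M0 {l..1} = M0 {e..?o + ?L} + M0 {?o + 2 * ?L..1}" "M1 {l..1} = M1 {e..?o + ?L} + M1 {?o + 2 * ?L..1}"
      using M_split_gap[of l 1 j] lb bA L g by (auto simp: e_def max_def min_def)
    thus "M0 {l..1} = ?r * (?o + ?L - e) + ?w" "M1 {l..1} = ?r * (((?o + ?L)\<^sup>2 - e\<^sup>2) / 2) + M1 {?o + 2 * ?L..1}"
      using M_lower_block_interval[of e "?o + ?L"] e M0_tail[of "Suc j"] g by auto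
  qed
  have "(?o + 2 * ?L) * ?w \<le> M1 {?o + 2 * ?L..1}"
    using M1_bounds(1)[of "{?o + 2 * ?L..1}" "?o + 2 * ?L" 1] M0_tail[of "Suc j"] g by force
  moreover have "M1 {l..1} \<le> (?o + ?L) * M0 {l..1}"
    using cc bA M0_nonneg[of "{l..1}"] by (simp add: mult_right_mono)
  moreover have "(?o + ?L) * (?r * (?o + ?L - e)) - ?r * (((?o + ?L)\<^sup>2 - e\<^sup>2) / 2)
      = ?r * (?o + ?L - e)\<^sup>2 / 2"
    by (simp add: power2_eq_square field_simps)
  moreover have "?r * (?o + ?L - e)\<^sup>2 \<le> ?r * ?L\<^sup>2" using e by (intro mult_left_mono power_mono) auto
  moreover have "?r * ?L\<^sup>2 = ?w * ?L" using J_geometry(4)[OF j1] by (simp add: power2_eq_square algebra_simps)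
  moreover have "(?o + ?L) * (?r * (?o + ?L - e) + ?w) = (?o + ?L) * (?r * (?o + ?L - e)) + (?o + ?L) * ?w"
    "(?o + 2 * ?L) * ?w = (?o + ?L) * ?w + ?L * ?w" "?w * ?L = ?L * ?w"
    by (simp_all add: algebra_simps)
  moreover have "0 < ?L * ?w" using L by simp
  ultimately show False unfolding M by linarith
qed

text \<open>The cell of the last point a0 below the gap ends at the midpoint with the first point b0
  above it. This midpoint cannot reach J0 (j+1), since then a0 = J1 j would be the centroid of a
  subinterval of J j ending in J1 j; nor can it lie in J j, since then a0 = J0 j would be the
  centroid of all of J j.\<close>

lemma midpoint_across_gap:
  assumes a0: "a0 \<in> \<alpha>" "J0 j \<le> a0" "a0 \<le> J0 j + Jlen j"
    and b0: "b0 \<in> \<alpha>" "J0 j + 2 * Jlen j \<le> b0" "b0 \<le> 1" and adj: "\<forall>c\<in>\<alpha>. a0 < c \<longrightarrow> b0 \<le> c"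
  shows "2 * (J0 j + Jlen j) < a0 + b0" "a0 + b0 < 2 * (J0 j + 2 * Jlen j)"
proof -
  let ?o = "J0 j" and ?L = "Jlen j" and ?w = "((1::real)/2)^j" and ?r = "((3::real)/2)^j"
  note L = Jlen_pos[of j] and g = J_geometry_j
  define h where "h = (a0 + b0) / 2"
  have rs: "right_boundary \<alpha> a0 h"
    unfolding h_def using a0 b0 L adj by (intro right_boundary_midpoint) auto
  obtain l where l: "left_boundary \<alpha> a0 l" using left_boundary_exists[OF finite_alpha] by blast
  have la: "l \<le> a0" using l unfolding left_boundary_def by simp
  note cc = centroid_boundaries[OF opt a0(1) l rs]
  have above: "\<And>y. y \<in> Jsupp \<Longrightarrow> l \<le> y \<Longrightarrow> y \<le> h \<Longrightarrow> ?o \<le> y"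
    using cell_above_J0[OF a0(1,2) l rs] by blast
  show "a0 + b0 < 2 * (?o + 2 * ?L)"
  proof (rule ccontr)
    assume "\<not> ?thesis"
    hence ab: "a0 = ?o + ?L" "h = ?o + 2 * ?L" using a0 b0 g unfolding h_def by auto
    define e where "e = max l ?o"
    have e: "?o \<le> e" "e \<le> ?o + ?L" unfolding e_def using la ab L by auto
    have "M0 {l..h} = M0 {e..?o + ?L}" "M1 {l..h} = M1 {e..?o + ?L}"
      using M_split_gap[of l h j] above ab la L g
      by (auto simp: e_def max_def min_def M_degenerate)
    moreover have "M0 {e..?o + ?L} = ?r * (?o + ?L - e)" "M1 {e..?o + ?L} = ?r * (((?o + ?L)\<^sup>2 - e\<^sup>2) / 2)"
      using M_lower_block_interval[of e "?o + ?L"] e by auto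
    ultimately have eq: "?r * (((?o + ?L)\<^sup>2 - e\<^sup>2) / 2) = (?o + ?L) * (?r * (?o + ?L - e))"
      and pos: "0 < ?r * (?o + ?L - e)"
      using cc ab by simp_all
    have "?r * (?o + ?L - e) * ((?o + ?L + e) / 2) = ?r * (?o + ?L - e) * (?o + ?L)"
      using eq by (simp add: power2_eq_square field_simps)
    moreover have "e < ?o + ?L" using pos by (simp add: zero_less_mult_iff)
    ultimately show False by simp
  qed
  show "2 * (?o + ?L) < a0 + b0"
  proof (rule ccontr)
    assume "\<not> ?thesis"
    hence ab: "a0 = ?o" "h = ?o + ?L" using a0 b0 g unfolding h_def by auto
    have "M0 {l..h} = M0 {?o..?o + ?L}" "M1 {l..h} = M1 {?o..?o + ?L}"
      using M_split_gap[of l h j] above ab la L g by (auto simp: max_def min_def M_degenerate)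
    hence "?w * (?o + ?L / 2) = ?o * ?w" using cc M_lower_block ab by simp
    thus False using L by (simp add: algebra_simps)
  qed
qed

lemma split_at_holds: "split_at \<alpha> j"
proof -
  let ?o = "J0 j" and ?L = "Jlen j"
  note L = Jlen_pos[of j] and g = J_geometry_j
  define SA where "SA = {c\<in>\<alpha>. c < ?o + 2 * ?L}"
  define SB where "SB = {c\<in>\<alpha>. ?o + 2 * ?L \<le> c}"
  obtain a where a: "a \<in> \<alpha>" "?o \<le> a" "a \<le> ?o + ?L" using exists_point_in_J by blast
  obtain b where b: "b \<in> \<alpha>" "?o + 2 * ?L \<le> b" "b \<le> 1" using exists_point_in_upper_tail by blast
  have fSA: "finite SA" "SA \<noteq> {}" unfolding SA_def using finite_alpha a L by auto
  have fSB: "finite SB" "SB \<noteq> {}" unfolding SB_def using finite_alpha b by auto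
  define a0 where "a0 = Max SA"
  define b0 where "b0 = Min SB"
  have a0S: "a0 \<in> SA" unfolding a0_def using fSA by (rule Max_in)
  have b0S: "b0 \<in> SB" unfolding b0_def using fSB by (rule Min_in)
  have a0max: "\<forall>c\<in>\<alpha>. c < ?o + 2 * ?L \<longrightarrow> c \<le> a0" unfolding a0_def using fSA by (auto simp: SA_def)
  have b0min: "\<forall>c\<in>\<alpha>. ?o + 2 * ?L \<le> c \<longrightarrow> b0 \<le> c" unfolding b0_def using fSB by (auto simp: SB_def)
  have a0: "a0 \<in> \<alpha>" "?o \<le> a0" "a0 \<le> ?o + ?L"
    using a0S a0max a L no_point_in_gap g by (force simp: SA_def not_le)+
  have b0: "b0 \<in> \<alpha>" "?o + 2 * ?L \<le> b0" "b0 \<le> 1" using b0S b0min b unfolding SB_def by force+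
  have adj: "\<forall>c\<in>\<alpha>. a0 < c \<longrightarrow> b0 \<le> c" using a0max b0min by force
  note mid = midpoint_across_gap[OF a0 b0 adj]
  show ?thesis
    unfolding split_at_def
  proof (intro conjI exI)
    show "\<alpha> \<inter> {J1 j<..<J0 (Suc j)} = {}" by (rule no_point_in_gap)
    show "a0 \<in> \<alpha>" "b0 \<in> \<alpha>" using a0 b0 by auto
    show "a0 \<in> J j" unfolding J_def using a0 g by auto
    show "J0 (Suc j) \<le> b0" "b0 \<le> 1" using b0 g by auto
    show "\<forall>c\<in>\<alpha>. c < J0 (Suc j) \<longrightarrow> c \<le> a0" using a0max g by auto
    show "\<forall>c\<in>\<alpha>. J0 (Suc j) \<le> c \<longrightarrow> b0 \<le> c" using b0min g by auto
    show "2 * J1 j < a0 + b0" "a0 + b0 < 2 * J0 (Suc j)" using mid g by simp_all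
  qed
qed

end

lemma split_at_nearer:
  assumes "split_at \<alpha> j"
  shows "J0 (Suc j) \<le> x \<Longrightarrow> a \<in> \<alpha> \<Longrightarrow> a < J0 (Suc j) \<Longrightarrow>
      \<exists>b\<in>\<alpha>. J0 (Suc j) \<le> b \<and> b \<le> 1 \<and> \<bar>x - b\<bar> < \<bar>x - a\<bar>"
    and "x \<le> J1 j \<Longrightarrow> a \<in> \<alpha> \<Longrightarrow> J0 (Suc j) \<le> a \<Longrightarrow> \<exists>b\<in>\<alpha>. b < J0 (Suc j) \<and> \<bar>x - b\<bar> < \<bar>x - a\<bar>"
proof -
  obtain a0 b0 where ab: "a0 \<in> \<alpha>" "a0 \<le> J1 j" "b0 \<in> \<alpha>" "J0 (Suc j) \<le> b0" "b0 \<le> 1"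
    "\<forall>c\<in>\<alpha>. c < J0 (Suc j) \<longrightarrow> c \<le> a0" "\<forall>c\<in>\<alpha>. J0 (Suc j) \<le> c \<longrightarrow> b0 \<le> c"
    "2 * J1 j < a0 + b0" "a0 + b0 < 2 * J0 (Suc j)"
    using assms unfolding split_at_def J_def by auto
  note gap = J1_less_J0_Suc[of j]
  show "\<exists>b\<in>\<alpha>. J0 (Suc j) \<le> b \<and> b \<le> 1 \<and> \<bar>x - b\<bar> < \<bar>x - a\<bar>"
    if "J0 (Suc j) \<le> x" "a \<in> \<alpha>" "a < J0 (Suc j)"
  proof -
    have "(x - b0)\<^sup>2 < (x - a)\<^sup>2" using ab that gap by (intro closer_right_strict) force+
    thus ?thesis using ab by (auto simp: abs_less_iff_square_less)
  qed
  show "\<exists>b\<in>\<alpha>. b < J0 (Suc j) \<and> \<bar>x - b\<bar> < \<bar>x - a\<bar>"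
    if "x \<le> J1 j" "a \<in> \<alpha>" "J0 (Suc j) \<le> a"
  proof -
    have "(x - a0)\<^sup>2 < (x - a)\<^sup>2" using ab that gap by (intro closer_left_strict) force+
    thus ?thesis using ab gap by (intro bexI[of _ a0]) (auto simp: abs_less_iff_square_less)
  qed
qed

lemma separated_1:
  assumes opt: "optimal_n_means n \<alpha>"
  shows "separated \<alpha> 1"
  unfolding separated_def
proof (intro conjI allI impI)
  have J0_1: "J0 1 = 0" by (simp add: J0_def)
  fix x a
  show "\<exists>b\<in>\<alpha>. J0 1 \<le> b \<and> b \<le> 1 \<and> \<bar>x - b\<bar> < \<bar>x - a\<bar>"
    if "a \<in> \<alpha>" "a < J0 1 \<or> 1 < a"
    using optimal_point_unit[OF opt that(1)] that(2) J0_1 by linarith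
  show "\<exists>b\<in>\<alpha>. b < J0 1 \<and> \<bar>x - b\<bar> < \<bar>x - a\<bar>" if "x \<in> Jsupp" "x < J0 1"
    using Jsupp_unit[OF that(1)] that(2) J0_1 by linarith
qed

lemma separated_Suc:
  assumes opt: "optimal_n_means n \<alpha>" and sp: "split_at \<alpha> j"
  shows "separated \<alpha> (Suc j)"
  unfolding separated_def
proof (intro conjI allI impI)
  fix x a assume x: "J0 (Suc j) < x" and a: "a \<in> \<alpha>" "a < J0 (Suc j) \<or> 1 < a"
  have "a < J0 (Suc j)" using a optimal_point_unit[OF opt a(1)] by auto
  thus "\<exists>b\<in>\<alpha>. J0 (Suc j) \<le> b \<and> b \<le> 1 \<and> \<bar>x - b\<bar> < \<bar>x - a\<bar>"
    using split_at_nearer(1)[OF sp _ a(1)] x by simp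
next
  fix x a assume x: "x \<in> Jsupp" "x < J0 (Suc j)" and a: "a \<in> \<alpha>" "J0 (Suc j) \<le> a"
  have "x \<le> J1 j" using Jsupp_gap[OF x(1), of j] x(2) by auto
  thus "\<exists>b\<in>\<alpha>. b < J0 (Suc j) \<and> \<bar>x - b\<bar> < \<bar>x - a\<bar>"
    using split_at_nearer(2)[OF sp _ a] by simp
qed

lemma split_at_levels:
  assumes opt: "optimal_n_means n \<alpha>"
  shows "2 \<le> card (\<alpha> \<inter> {J0 (Suc k)..1}) \<Longrightarrow> split_at \<alpha> (Suc k)"
proof (induction k)
  case 0
  thus ?case using split_at_holds[OF opt _ separated_1[OF opt]] by simp
next
  case (Suc k)
  have fin: "finite \<alpha>" using opt unfolding optimal_n_means_def by auto
  have "\<alpha> \<inter> {J0 (Suc (Suc k))..1} \<subseteq> \<alpha> \<inter> {J0 (Suc k)..1}"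
    using J0_mono[of "Suc k" "Suc (Suc k)"] by auto
  hence "card (\<alpha> \<inter> {J0 (Suc (Suc k))..1}) \<le> card (\<alpha> \<inter> {J0 (Suc k)..1})"
    by (intro card_mono) (auto simp: fin)
  hence "split_at \<alpha> (Suc k)" using Suc by simp
  hence "separated \<alpha> (Suc (Suc k))" by (rule separated_Suc[OF opt])
  thus ?case using split_at_holds[OF opt _ _ Suc.prems] by simp
qed

lemma voronoi_nearest: "finite \<alpha> \<Longrightarrow> x \<in> voronoi a \<alpha> \<Longrightarrow> c \<in> \<alpha> \<Longrightarrow> \<bar>x - a\<bar> \<le> \<bar>x - c\<bar>"
  unfolding voronoi_def by (auto intro: Min_le)

lemma split_at_voronoi:
  assumes fin: "finite \<alpha>" and sp: "split_at \<alpha> j"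
  shows "a \<in> \<alpha> \<inter> J j \<Longrightarrow> voronoi a \<alpha> \<inter> {J0 (Suc j)..1} = {}"
    and "b \<in> \<alpha> \<inter> {J0 (Suc j)..1} \<Longrightarrow> voronoi b \<alpha> \<inter> J j = {}"
proof -
  show "voronoi a \<alpha> \<inter> {J0 (Suc j)..1} = {}" if a: "a \<in> \<alpha> \<inter> J j"
  proof (rule ccontr)
    assume "voronoi a \<alpha> \<inter> {J0 (Suc j)..1} \<noteq> {}"
    then obtain x where x: "x \<in> voronoi a \<alpha>" "J0 (Suc j) \<le> x" by auto
    have "a < J0 (Suc j)" using a J1_less_J0_Suc[of j] by (auto simp: J_def)
    then obtain c where "c \<in> \<alpha>" "\<bar>x - c\<bar> < \<bar>x - a\<bar>" using split_at_nearer(1)[OF sp x(2)] a by blast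
    thus False using voronoi_nearest[OF fin x(1)] by fastforce
  qed
  show "voronoi b \<alpha> \<inter> J j = {}" if b: "b \<in> \<alpha> \<inter> {J0 (Suc j)..1}"
  proof (rule ccontr)
    assume "voronoi b \<alpha> \<inter> J j \<noteq> {}"
    then obtain x where x: "x \<in> voronoi b \<alpha>" "x \<le> J1 j" by (auto simp: J_def)
    then obtain c where "c \<in> \<alpha>" "\<bar>x - c\<bar> < \<bar>x - b\<bar>" using split_at_nearer(2)[OF sp x(2)] b by auto
    thus False using voronoi_nearest[OF fin x(1)] by fastforce
  qed
qed

theorem proposition4p6:
  fixes k n :: nat and \<alpha> :: "real set"
  assumes "k \<ge> 1" and "n \<ge> 1"
    and "optimal_n_means n \<alpha>"
    and "card (\<alpha> \<inter> {J0 (k+1) .. 1}) \<ge> 2"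
  shows "(\<alpha> \<inter> J (k+1) \<noteq> {} \<and> \<alpha> \<inter> {J0 (k+2) .. 1} \<noteq> {})
       \<and> \<alpha> \<inter> {J1 (k+1) <..< J0 (k+2)} = {}
       \<and> (\<forall>a \<in> \<alpha> \<inter> J (k+1). voronoi a \<alpha> \<inter> {J0 (k+2) .. 1} = {})
       \<and> (\<forall>a \<in> \<alpha> \<inter> {J0 (k+2) .. 1}. voronoi a \<alpha> \<inter> J (k+1) = {})"
proof -
  have fin: "finite \<alpha>" using assms(3) unfolding optimal_n_means_def by auto
  have levels: "k + 1 = Suc k" "k + 2 = Suc (Suc k)" by simp_all
  have sp: "split_at \<alpha> (Suc k)" using split_at_levels[OF assms(3)] assms(4) by simp
  hence "\<alpha> \<inter> J (Suc k) \<noteq> {}" "\<alpha> \<inter> {J0 (Suc (Suc k))..1} \<noteq> {}"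
    "\<alpha> \<inter> {J1 (Suc k)<..<J0 (Suc (Suc k))} = {}"
    unfolding split_at_def by auto
  thus ?thesis unfolding levels using split_at_voronoi[OF fin sp] by blast
qed

end
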